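(* For every $k\ge1$ there is $c>0$ such that, for every $n>2k$ and every pair of weighted hypergraphs $w,u:[n]^{(k)}\to\mathbb{R}$, $$\mathbb{E}_\pi|\langle w_\pi,u\rangle|\ge cn^k\sum_{i=0}^k n^{-i/2}W_iU_i,$$ where $\pi$ is a uniformly random permutation of $[n]$ and $(W_0,\ldots,W_k)$, $(U_0,\ldots,U_k)$ are the $W$-vectors of $w$ and $u$ respectively.
   Context: $[n]=\{1,\ldots,n\}$; $V^{(k)}$ is the family of $k$-subsets of $V$. A weighted $k$-uniform hypergraph on $V$ is a function $w:V^{(k)}\to\mathbb{R}$; $w(S)=\sum_{e\in S^{(k)}}w(e)$, $\langle w,u\rangle=\sum_{e\in V^{(k)}}w(e)u(e)$, and $w_\pi(e)=w(\pi^{-1}(e))$ for a permutation $\pi$ of $V$. $W$-vector (defined recursively on $k$): for a weighted $k$-uniform hypergraph $w$ on an $n$-set $V$, $W_0=|w(V)|/\binom nk$ (for $k=0$, $w$ is a single real number and $W_0=|w|$). For $k\ge1$ and distinct $x,y\in V$, the difference weighting $w^{xy}:(V\setminus\{x,y\})^{(k-1)}\to\mathbb{R}$ is $w^{xy}(e)=w(e\cup\{x\})-w(e\cup\{y\})$; letting $(W^{xy}_0,\ldots,W^{xy}_{k-1})$ be its $W$-vector, for $1\le i\le k$, $W_i=\frac{1}{n(n-1)}\sum_{(x,y):\,x\ne y}W^{xy}_{i-1}$ (average over ordered pairs of distinct vertices). The $W$-vector is $(W_0,\ldots,W_k)$. *)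

theory Defs
  imports "HOL-Analysis.Analysis" "HOL-Combinatorics.Permutations"
begin

definition ksets :: "'a set \<Rightarrow> nat \<Rightarrow> 'a set set" where
  "ksets V k = {e. e \<subseteq> V \<and> card e = k}"

text \<open>Weighted k-uniform hypergraphs are functions on sets; only values on
  k-subsets of the vertex set are ever read.\<close>
fun Wvec :: "nat \<Rightarrow> 'a set \<Rightarrow> ('a set \<Rightarrow> real) \<Rightarrow> nat \<Rightarrow> real" where
  "Wvec k V w 0 = \<bar>\<Sum>e\<in>ksets V k. w e\<bar> / real (card V choose k)"
| "Wvec k V w (Suc i) =
     (\<Sum>p\<in>{(x,y). x \<in> V \<and> y \<in> V \<and> x \<noteq> y}.
        Wvec (k - 1) (V - {fst p, snd p})
             (\<lambda>e. w (insert (fst p) e) - w (insert (snd p) e)) i)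
     / (real (card V) * (real (card V) - 1))"

definition perm_weight :: "('a \<Rightarrow> 'a) \<Rightarrow> ('a set \<Rightarrow> real) \<Rightarrow> 'a set \<Rightarrow> real" where
  "perm_weight \<pi> w e = w (inv \<pi> ` e)"

definition hyp_inner :: "'a set \<Rightarrow> nat \<Rightarrow> ('a set \<Rightarrow> real) \<Rightarrow> ('a set \<Rightarrow> real) \<Rightarrow> real" where
  "hyp_inner V k w u = (\<Sum>e\<in>ksets V k. w e * u e)"

end

theory Submission
  imports Defs
begin

text \<open>
  Write \<open>F(\<pi>) = \<langle>w\<^sub>\<pi>, u\<rangle>\<close> and induct on \<open>k\<close>, for bijections between two \<open>n\<close>-sets, so that the
  induction can pass to subsets. The mean of \<open>F\<close> over all \<open>\<pi>\<close> is \<open>w(V) u(V) / C(n,k)\<close>, which gives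
  the term \<open>i = 0\<close>. Composing \<open>\<pi>\<close> with the transposition of \<open>x = \<pi> a\<close> and \<open>y = \<pi> b\<close> changes
  \<open>F\<close> by the inner product of the difference weightings \<open>w\<^sup>a\<^sup>b\<close> and \<open>u\<^sup>x\<^sup>y\<close> on the other
  \<open>n - 2\<close> points, so by induction \<open>\<Sum>\<^sub>x\<^sub>y \<bar>F(\<pi>) - F((x y) \<circ> \<pi>)\<bar>\<close> is large on average.
  Conversely, \<open>m = n div 2\<close> disjoint transpositions make \<open>F\<close> a function of degree at most \<open>k\<close>
  on the cube \<open>{0,1}\<^sup>m\<close>; Bonami's lemma bounds its total absolute influence by
  \<open>3\<^sup>k \<surd>(k m)\<close> times its mean absolute value, and averaging over all placements of the
  transpositions bounds that sum by \<open>O(n\<^sup>3\<^sup>/\<^sup>2)\<close> times the mean of \<open>\<bar>F\<bar>\<close>. Comparing the two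
  bounds loses a factor \<open>\<surd>n\<close> per level.
\<close>

section \<open>Functions on the discrete cube\<close>

definition cube :: "nat \<Rightarrow> (nat \<Rightarrow> bool) set" where
  "cube m = {\<epsilon>. \<forall>i\<ge>m. \<not> \<epsilon> i}"

lemma cube_0: "cube 0 = {\<lambda>_. False}"
  unfolding cube_def by auto

lemma cube_at_dim: "\<epsilon> \<in> cube m \<Longrightarrow> \<epsilon> m = False"
  by (auto simp: cube_def)

lemma cube_Suc: "cube (Suc m) = cube m \<union> (\<lambda>\<epsilon>. \<epsilon>(m:=True)) ` cube m"
proof (intro equalityI subsetI)
  fix \<epsilon> assume e: "\<epsilon> \<in> cube (Suc m)"
  show "\<epsilon> \<in> cube m \<union> (\<lambda>\<epsilon>. \<epsilon>(m:=True)) ` cube m"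
  proof (cases "\<epsilon> m")
    case True
    then have "\<epsilon> = (\<epsilon>(m:=False))(m:=True)" and "\<epsilon>(m:=False) \<in> cube m"
      using e by (auto simp: cube_def fun_eq_iff)
    then show ?thesis by blast
  next
    case False
    have "\<not> \<epsilon> i" if "m \<le> i" for i
      using e False that by (cases "i = m") (auto simp: cube_def)
    then have "\<epsilon> \<in> cube m" by (simp add: cube_def)
    then show ?thesis by blast
  qed
qed (auto simp: cube_def)

lemma finite_cube: "finite (cube m)"
  by (induction m) (simp_all add: cube_0 cube_Suc)

lemma sum_cube_Suc:
  "(\<Sum>\<epsilon>\<in>cube (Suc m). f \<epsilon>) = (\<Sum>\<epsilon>\<in>cube m. f \<epsilon> + f (\<epsilon>(m:=True)))"
proof -
  have inj: "inj_on (\<lambda>\<epsilon>. \<epsilon>(m:=True)) (cube m)"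
  proof (rule inj_onI)
    fix a b assume a: "a \<in> cube m" and b: "b \<in> cube m" and eq: "a(m:=True) = b(m:=True)"
    show "a = b"
    proof
      fix i show "a i = b i"
        using fun_cong[OF eq, of i] cube_at_dim[OF a] cube_at_dim[OF b] by (cases "i = m") auto
    qed
  qed
  have "cube m \<inter> (\<lambda>\<epsilon>. \<epsilon>(m:=True)) ` cube m = {}"
    using cube_at_dim by fastforce
  then have "(\<Sum>\<epsilon>\<in>cube (Suc m). f \<epsilon>)
      = (\<Sum>\<epsilon>\<in>cube m. f \<epsilon>) + (\<Sum>\<epsilon>\<in>(\<lambda>\<epsilon>. \<epsilon>(m:=True)) ` cube m. f \<epsilon>)"
    unfolding cube_Suc by (intro sum.union_disjoint) (auto simp: finite_cube)
  also have "(\<Sum>\<epsilon>\<in>(\<lambda>\<epsilon>. \<epsilon>(m:=True)) ` cube m. f \<epsilon>) = (\<Sum>\<epsilon>\<in>cube m. f (\<epsilon>(m:=True)))"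
    by (rule sum.reindex[OF inj, unfolded comp_def])
  finally show ?thesis by (simp add: sum.distrib)
qed

definition cube_mean :: "nat \<Rightarrow> ((nat \<Rightarrow> bool) \<Rightarrow> real) \<Rightarrow> real" where
  "cube_mean m f = (\<Sum>\<epsilon>\<in>cube m. f \<epsilon>) / 2 ^ m"

lemma cube_mean_0: "cube_mean 0 f = f (\<lambda>_. False)"
  by (simp add: cube_mean_def cube_0)

lemma cube_mean_Suc: "cube_mean (Suc m) f = (cube_mean m f + cube_mean m (\<lambda>\<epsilon>. f (\<epsilon>(m:=True)))) / 2"
  by (simp add: cube_mean_def sum_cube_Suc sum.distrib add_divide_distrib)

lemma cube_mean_const: "cube_mean m (\<lambda>_. c) = c"
  by (induction m) (simp_all add: cube_mean_0 cube_mean_Suc)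

lemma cube_mean_cong: "(\<And>\<epsilon>. \<epsilon> \<in> cube m \<Longrightarrow> f \<epsilon> = g \<epsilon>) \<Longrightarrow> cube_mean m f = cube_mean m g"
  unfolding cube_mean_def by (simp cong: sum.cong)

lemma cube_mean_add: "cube_mean m (\<lambda>\<epsilon>. f \<epsilon> + g \<epsilon>) = cube_mean m f + cube_mean m g"
  unfolding cube_mean_def by (simp add: sum.distrib add_divide_distrib)

lemma cube_mean_cmult: "cube_mean m (\<lambda>\<epsilon>. c * f \<epsilon>) = c * cube_mean m f"
  unfolding cube_mean_def by (simp add: sum_distrib_left)

lemma cube_mean_sum: "finite I \<Longrightarrow> cube_mean m (\<lambda>\<epsilon>. \<Sum>i\<in>I. f i \<epsilon>) = (\<Sum>i\<in>I. cube_mean m (f i))"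
  unfolding cube_mean_def by (subst sum.swap) (simp add: sum_divide_distrib)

lemma cube_mean_nonneg: "(\<And>\<epsilon>. \<epsilon> \<in> cube m \<Longrightarrow> 0 \<le> f \<epsilon>) \<Longrightarrow> 0 \<le> cube_mean m f"
  unfolding cube_mean_def by (simp add: sum_nonneg)

lemma cube_mean_Cauchy_Schwarz:
  "(cube_mean m (\<lambda>\<epsilon>. a \<epsilon> * b \<epsilon>))\<^sup>2 \<le> cube_mean m (\<lambda>\<epsilon>. (a \<epsilon>)\<^sup>2) * cube_mean m (\<lambda>\<epsilon>. (b \<epsilon>)\<^sup>2)"
proof -
  have "(\<Sum>\<epsilon>\<in>cube m. a \<epsilon> * b \<epsilon>)\<^sup>2 / (2^m)\<^sup>2
      \<le> (\<Sum>\<epsilon>\<in>cube m. (a \<epsilon>)\<^sup>2) * (\<Sum>\<epsilon>\<in>cube m. (b \<epsilon>)\<^sup>2) / (2^m)\<^sup>2"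
    by (intro divide_right_mono Cauchy_Schwarz_ineq_sum) simp
  then show ?thesis unfolding cube_mean_def by (simp add: power_divide power2_eq_square)
qed

definition cube_avg :: "nat \<Rightarrow> ((nat \<Rightarrow> bool) \<Rightarrow> real) \<Rightarrow> (nat \<Rightarrow> bool) \<Rightarrow> real" where
  "cube_avg j f \<epsilon> = (f (\<epsilon>(j:=False)) + f (\<epsilon>(j:=True))) / 2"

definition cube_deriv :: "nat \<Rightarrow> ((nat \<Rightarrow> bool) \<Rightarrow> real) \<Rightarrow> (nat \<Rightarrow> bool) \<Rightarrow> real" where
  "cube_deriv j f \<epsilon> = (f (\<epsilon>(j:=True)) - f (\<epsilon>(j:=False))) / 2"

lemma cube_avg_deriv_restrict:
  assumes "\<epsilon> \<in> cube m"
  shows "f \<epsilon> = cube_avg m f \<epsilon> - cube_deriv m f \<epsilon>"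
    and "f (\<epsilon>(m:=True)) = cube_avg m f \<epsilon> + cube_deriv m f \<epsilon>"
proof -
  have e: "\<epsilon>(m:=False) = \<epsilon>" by (rule fun_upd_idem) (rule cube_at_dim[OF assms])
  show "f \<epsilon> = cube_avg m f \<epsilon> - cube_deriv m f \<epsilon>"
    unfolding cube_avg_def cube_deriv_def e by argo
  show "f (\<epsilon>(m:=True)) = cube_avg m f \<epsilon> + cube_deriv m f \<epsilon>"
    unfolding cube_avg_def cube_deriv_def by argo
qed

lemma cube_mean_midpoint: "(cube_mean m f + cube_mean m g) / 2 = cube_mean m (\<lambda>\<epsilon>. (f \<epsilon> + g \<epsilon>) / 2)"
  unfolding cube_mean_def by (simp add: sum.distrib sum_divide_distrib[symmetric] add_divide_distrib)

lemma cube_mean_Suc_split: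
  "cube_mean (Suc m) (\<lambda>\<epsilon>. \<phi> (f \<epsilon>))
     = cube_mean m (\<lambda>\<epsilon>. (\<phi> (cube_avg m f \<epsilon> - cube_deriv m f \<epsilon>) + \<phi> (cube_avg m f \<epsilon> + cube_deriv m f \<epsilon>)) / 2)"
proof -
  have "cube_mean m (\<lambda>\<epsilon>. \<phi> (f \<epsilon>)) = cube_mean m (\<lambda>\<epsilon>. \<phi> (cube_avg m f \<epsilon> - cube_deriv m f \<epsilon>))"
    by (rule cube_mean_cong) (metis cube_avg_deriv_restrict(1))
  moreover have "cube_mean m (\<lambda>\<epsilon>. \<phi> (f (\<epsilon>(m:=True))))
      = cube_mean m (\<lambda>\<epsilon>. \<phi> (cube_avg m f \<epsilon> + cube_deriv m f \<epsilon>))"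
    by (rule cube_mean_cong) (metis cube_avg_deriv_restrict(2))
  ultimately show ?thesis
    unfolding cube_mean_Suc by (simp only: cube_mean_midpoint)
qed

lemma cube_mean_Suc_avg: "cube_mean (Suc m) f = cube_mean m (cube_avg m f)"
  using cube_mean_Suc_split[where \<phi>="\<lambda>x. x"] by simp

lemma cube_mean_Suc_square:
  "cube_mean (Suc m) (\<lambda>\<epsilon>. (f \<epsilon>)\<^sup>2)
     = cube_mean m (\<lambda>\<epsilon>. (cube_avg m f \<epsilon>)\<^sup>2) + cube_mean m (\<lambda>\<epsilon>. (cube_deriv m f \<epsilon>)\<^sup>2)"
  unfolding cube_mean_Suc_split[where \<phi>="\<lambda>x. x\<^sup>2"] cube_mean_add[symmetric]
  by (rule cube_mean_cong) (simp add: power2_eq_square field_simps)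

lemma cube_mean_Suc_fourth:
  "cube_mean (Suc m) (\<lambda>\<epsilon>. f \<epsilon> ^ 4)
     = cube_mean m (\<lambda>\<epsilon>. cube_avg m f \<epsilon> ^ 4)
       + 6 * cube_mean m (\<lambda>\<epsilon>. (cube_avg m f \<epsilon>)\<^sup>2 * (cube_deriv m f \<epsilon>)\<^sup>2)
       + cube_mean m (\<lambda>\<epsilon>. cube_deriv m f \<epsilon> ^ 4)"
  unfolding cube_mean_Suc_split[where \<phi>="\<lambda>x. x ^ 4"] cube_mean_add[symmetric] cube_mean_cmult[symmetric]
  by (rule cube_mean_cong) (simp add: power4_eq_xxxx power2_eq_square field_simps)

definition junta :: "nat set \<Rightarrow> ((nat \<Rightarrow> bool) \<Rightarrow> real) \<Rightarrow> bool" where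
  "junta S g \<longleftrightarrow> (\<forall>\<epsilon> \<epsilon>'. (\<forall>i\<in>S. \<epsilon> i = \<epsilon>' i) \<longrightarrow> g \<epsilon> = g \<epsilon>')"

text \<open>Degree is defined without Fourier expansion: a function has degree at most \<open>k\<close> if it is
  a finite sum of juntas on at most \<open>k\<close> coordinates.\<close>

inductive deg_le :: "nat \<Rightarrow> ((nat \<Rightarrow> bool) \<Rightarrow> real) \<Rightarrow> bool" for k where
  deg_zero: "deg_le k (\<lambda>_. 0)"
| deg_add: "junta S g \<Longrightarrow> finite S \<Longrightarrow> card S \<le> k \<Longrightarrow> deg_le k f \<Longrightarrow> deg_le k (\<lambda>\<epsilon>. g \<epsilon> + f \<epsilon>)"

lemma deg_le_sum:
  assumes "finite I" "\<And>i. i \<in> I \<Longrightarrow> junta (S i) (g i) \<and> finite (S i) \<and> card (S i) \<le> k"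
  shows "deg_le k (\<lambda>\<epsilon>. \<Sum>i\<in>I. g i \<epsilon>)"
  using assms
proof (induction I rule: finite_induct)
  case empty then show ?case by (simp add: deg_le.deg_zero)
next
  case (insert x F)
  then show ?case using deg_le.deg_add[of "S x" "g x" k "\<lambda>\<epsilon>. \<Sum>i\<in>F. g i \<epsilon>"] by simp
qed

lemma deg_le_0_const: "deg_le 0 f \<Longrightarrow> f \<epsilon> = f \<epsilon>'"
  by (induction rule: deg_le.induct) (auto simp: junta_def)

lemma junta_fun_upd:
  assumes "junta S g" and "\<forall>i\<in>S - {j}. \<epsilon> i = \<epsilon>' i"
  shows "g (\<epsilon>(j:=b)) = g (\<epsilon>'(j:=b))"
proof -
  have "\<forall>i\<in>S. (\<epsilon>(j:=b)) i = (\<epsilon>'(j:=b)) i" using assms(2) by auto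
  then show ?thesis using assms(1) unfolding junta_def by blast
qed

lemma junta_cube_avg:
  assumes "junta S g"
  shows "junta (S - {j}) (cube_avg j g)"
  unfolding junta_def
proof (intro allI impI)
  fix \<epsilon> \<epsilon>' :: "nat \<Rightarrow> bool" assume agree: "\<forall>i\<in>S - {j}. \<epsilon> i = \<epsilon>' i"
  show "cube_avg j g \<epsilon> = cube_avg j g \<epsilon>'"
    using junta_fun_upd[OF assms agree, of False] junta_fun_upd[OF assms agree, of True]
    by (simp add: cube_avg_def)
qed

lemma junta_cube_deriv:
  assumes "junta S g"
  shows "junta (S - {j}) (cube_deriv j g)"
  unfolding junta_def
proof (intro allI impI)
  fix \<epsilon> \<epsilon>' :: "nat \<Rightarrow> bool" assume agree: "\<forall>i\<in>S - {j}. \<epsilon> i = \<epsilon>' i"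
  show "cube_deriv j g \<epsilon> = cube_deriv j g \<epsilon>'"
    using junta_fun_upd[OF assms agree, of False] junta_fun_upd[OF assms agree, of True]
    by (simp add: cube_deriv_def)
qed

lemma cube_deriv_outside_junta:
  assumes "junta S g" and "j \<notin> S"
  shows "cube_deriv j g \<epsilon> = 0"
proof -
  have "\<forall>i\<in>S. (\<epsilon>(j:=True)) i = (\<epsilon>(j:=False)) i" using assms(2) by auto
  then have "g (\<epsilon>(j:=True)) = g (\<epsilon>(j:=False))" using assms(1) unfolding junta_def by blast
  then show ?thesis by (simp add: cube_deriv_def)
qed

lemma deg_le_cube_avg: "deg_le k f \<Longrightarrow> deg_le k (cube_avg j f)"
proof (induction rule: deg_le.induct)
  case deg_zero
  then show ?case by (simp add: cube_avg_def deg_le.deg_zero)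
next
  case (deg_add S g f)
  have "card (S - {j}) \<le> k" using deg_add(2,3) by (meson card_Diff1_le le_trans card_mono Diff_subset)
  then have "deg_le k (\<lambda>\<epsilon>. cube_avg j g \<epsilon> + cube_avg j f \<epsilon>)"
    using deg_add junta_cube_avg by (blast intro: deg_le.deg_add)
  moreover have "cube_avg j (\<lambda>\<epsilon>. g \<epsilon> + f \<epsilon>) = (\<lambda>\<epsilon>. cube_avg j g \<epsilon> + cube_avg j f \<epsilon>)"
    by (rule ext, unfold cube_avg_def, argo)
  ultimately show ?case by simp
qed

lemma deg_le_cube_deriv: "deg_le k f \<Longrightarrow> deg_le (k - 1) (cube_deriv j f)"
proof (induction rule: deg_le.induct)
  case deg_zero
  then show ?case by (simp add: cube_deriv_def deg_le.deg_zero)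
next
  case (deg_add S g f)
  have split: "cube_deriv j (\<lambda>\<epsilon>. g \<epsilon> + f \<epsilon>) = (\<lambda>\<epsilon>. cube_deriv j g \<epsilon> + cube_deriv j f \<epsilon>)"
    by (rule ext, unfold cube_deriv_def, argo)
  show ?case
  proof (cases "j \<in> S")
    case True
    then have "card (S - {j}) \<le> k - 1" using deg_add(2,3) by simp
    then show ?thesis
      unfolding split using deg_add junta_cube_deriv by (blast intro: deg_le.deg_add)
  next
    case False
    then show ?thesis
      unfolding split using deg_add cube_deriv_outside_junta by simp
  qed
qed

lemma bonami_lemma:
  assumes "deg_le k f"
  shows "cube_mean m (\<lambda>\<epsilon>. f \<epsilon> ^ 4) \<le> 9 ^ k * (cube_mean m (\<lambda>\<epsilon>. (f \<epsilon>)\<^sup>2))\<^sup>2"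
  using assms
proof (induction m arbitrary: k f)
  case 0
  have "f (\<lambda>_. False) ^ 4 \<le> 9 ^ k * f (\<lambda>_. False) ^ 4"
    using mult_right_mono[of 1 "9 ^ k" "f (\<lambda>_. False) ^ 4"] by simp
  then show ?case by (simp add: cube_mean_0 power_mult[symmetric])
next
  case (Suc m)
  show ?case
  proof (cases k)
    case 0
    then have const: "f \<epsilon> = f (\<lambda>_. False)" for \<epsilon> using deg_le_0_const Suc.prems by blast
    have "cube_mean (Suc m) (\<lambda>\<epsilon>. f \<epsilon> ^ 4) = f (\<lambda>_. False) ^ 4"
      by (subst const) (rule cube_mean_const)
    moreover have "cube_mean (Suc m) (\<lambda>\<epsilon>. (f \<epsilon>)\<^sup>2) = (f (\<lambda>_. False))\<^sup>2"
      by (subst const) (rule cube_mean_const)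
    ultimately show ?thesis using 0 by (simp add: power_mult[symmetric])
  next
    case (Suc k')
    let ?g = "cube_avg m f" and ?h = "cube_deriv m f"
    define G where "G = cube_mean m (\<lambda>\<epsilon>. (?g \<epsilon>)\<^sup>2)"
    define H where "H = cube_mean m (\<lambda>\<epsilon>. (?h \<epsilon>)\<^sup>2)"
    define t :: real where "t = 9 ^ k'"
    have G0: "G \<ge> 0" and H0: "H \<ge> 0" and t0: "t > 0"
      unfolding G_def H_def t_def by (simp_all add: cube_mean_nonneg)
    have IHg: "cube_mean m (\<lambda>\<epsilon>. ?g \<epsilon> ^ 4) \<le> 9 * t * G\<^sup>2"
      using Suc.IH[OF deg_le_cube_avg[OF Suc.prems]] unfolding G_def t_def Suc by simp
    have IHh: "cube_mean m (\<lambda>\<epsilon>. ?h \<epsilon> ^ 4) \<le> t * H\<^sup>2"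
      using Suc.IH[OF deg_le_cube_deriv[OF Suc.prems]] unfolding H_def t_def Suc by simp
    have "(cube_mean m (\<lambda>\<epsilon>. (?g \<epsilon>)\<^sup>2 * (?h \<epsilon>)\<^sup>2))\<^sup>2
        \<le> cube_mean m (\<lambda>\<epsilon>. ?g \<epsilon> ^ 4) * cube_mean m (\<lambda>\<epsilon>. ?h \<epsilon> ^ 4)"
      using cube_mean_Cauchy_Schwarz[of m "\<lambda>\<epsilon>. (?g \<epsilon>)\<^sup>2" "\<lambda>\<epsilon>. (?h \<epsilon>)\<^sup>2"]
      by (simp add: power_mult[symmetric])
    also have "\<dots> \<le> (9 * t * G\<^sup>2) * (t * H\<^sup>2)"
      using IHg IHh t0 by (intro mult_mono) (simp_all add: cube_mean_nonneg)
    also have "\<dots> = (3 * t * G * H)\<^sup>2" by (simp add: power2_eq_square)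
    finally have "cube_mean m (\<lambda>\<epsilon>. (?g \<epsilon>)\<^sup>2 * (?h \<epsilon>)\<^sup>2) \<le> 3 * t * G * H"
      by (rule power2_le_imp_le) (use t0 G0 H0 in simp)
    then have "cube_mean (Suc m) (\<lambda>\<epsilon>. f \<epsilon> ^ 4) \<le> 9 * t * G\<^sup>2 + 6 * (3 * t * G * H) + t * H\<^sup>2"
      unfolding cube_mean_Suc_fourth using IHg IHh by linarith
    also have "\<dots> \<le> 9 * t * (G + H)\<^sup>2"
      using t0 H0 by (simp add: power2_eq_square algebra_simps)
    finally show ?thesis
      unfolding cube_mean_Suc_square G_def H_def t_def Suc by simp
  qed
qed

lemma cube_deriv_const: "(\<And>\<epsilon> \<epsilon>'. f \<epsilon> = f \<epsilon>') \<Longrightarrow> cube_deriv j f \<epsilon> = 0"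
  unfolding cube_deriv_def by (metis diff_self div_0)

lemma cube_avg_cube_deriv_same: "cube_avg m (cube_deriv m f) = cube_deriv m f"
  by (rule ext) (simp add: cube_avg_def cube_deriv_def)

lemma cube_deriv_cube_deriv_same: "cube_deriv m (cube_deriv m f) = (\<lambda>_. 0)"
  by (rule ext) (simp add: cube_deriv_def)

lemma cube_deriv_commute:
  assumes "j \<noteq> m"
  shows "cube_avg m (cube_deriv j f) = cube_deriv j (cube_avg m f)"
    and "cube_deriv m (cube_deriv j f) = cube_deriv j (cube_deriv m f)"
  using assms
  by (auto simp: fun_eq_iff cube_avg_def cube_deriv_def fun_upd_twist[of j m] field_simps)

lemma total_influence_le:
  assumes "deg_le k f"
  shows "(\<Sum>j<m. cube_mean m (\<lambda>\<epsilon>. (cube_deriv j f \<epsilon>)\<^sup>2))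
           \<le> real k * (cube_mean m (\<lambda>\<epsilon>. (f \<epsilon>)\<^sup>2) - (cube_mean m f)\<^sup>2)"
  using assms
proof (induction m arbitrary: k f)
  case 0
  then show ?case by (simp add: cube_mean_0)
next
  case (Suc m)
  show ?case
  proof (cases k)
    case 0
    then have "cube_deriv j f \<epsilon> = 0" for j \<epsilon>
      using deg_le_0_const[of f] Suc.prems 0 by (intro cube_deriv_const) blast
    then show ?thesis using 0 by (simp add: cube_mean_const)
  next
    case (Suc k')
    let ?g = "cube_avg m f" and ?h = "cube_deriv m f"
    have IHg: "(\<Sum>j<m. cube_mean m (\<lambda>\<epsilon>. (cube_deriv j ?g \<epsilon>)\<^sup>2))
        \<le> real k * (cube_mean m (\<lambda>\<epsilon>. (?g \<epsilon>)\<^sup>2) - (cube_mean m ?g)\<^sup>2)"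
      using Suc.IH[OF deg_le_cube_avg[OF Suc.prems]] .
    have "(\<Sum>j<m. cube_mean m (\<lambda>\<epsilon>. (cube_deriv j ?h \<epsilon>)\<^sup>2))
        \<le> real k' * (cube_mean m (\<lambda>\<epsilon>. (?h \<epsilon>)\<^sup>2) - (cube_mean m ?h)\<^sup>2)"
      using Suc.IH[OF deg_le_cube_deriv[OF Suc.prems]] Suc by simp
    also have "\<dots> \<le> real k' * cube_mean m (\<lambda>\<epsilon>. (?h \<epsilon>)\<^sup>2)"
      by (intro mult_left_mono) auto
    finally have IHh: "(\<Sum>j<m. cube_mean m (\<lambda>\<epsilon>. (cube_deriv j ?h \<epsilon>)\<^sup>2))
        \<le> real k' * cube_mean m (\<lambda>\<epsilon>. (?h \<epsilon>)\<^sup>2)" .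
    have "(\<Sum>j<m. cube_mean (Suc m) (\<lambda>\<epsilon>. (cube_deriv j f \<epsilon>)\<^sup>2))
        = (\<Sum>j<m. cube_mean m (\<lambda>\<epsilon>. (cube_deriv j ?g \<epsilon>)\<^sup>2))
          + (\<Sum>j<m. cube_mean m (\<lambda>\<epsilon>. (cube_deriv j ?h \<epsilon>)\<^sup>2))"
      by (simp add: cube_mean_Suc_square cube_deriv_commute sum.distrib)
    moreover have "cube_mean (Suc m) (\<lambda>\<epsilon>. (cube_deriv m f \<epsilon>)\<^sup>2) = cube_mean m (\<lambda>\<epsilon>. (?h \<epsilon>)\<^sup>2)"
      by (simp add: cube_mean_Suc_square cube_avg_cube_deriv_same cube_deriv_cube_deriv_same cube_mean_const)
    ultimately show ?thesis
      using IHg IHh unfolding cube_mean_Suc_square cube_mean_Suc_avg Suc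
      by (simp add: algebra_simps)
  qed
qed

lemma moment_interpolation:
  fixes P Q R c :: real
  assumes "0 \<le> c" and "0 \<le> P" and "P\<^sup>2 \<le> Q * R" and "R\<^sup>2 \<le> P * (c * P\<^sup>2)"
  shows "P \<le> c * Q\<^sup>2"
proof (cases "P = 0")
  case True
  then show ?thesis
    using assms(1) by simp
next
  case False
  then have "P > 0" using assms(2) by simp
  have "P * P ^ 3 = (P\<^sup>2)\<^sup>2" by (simp add: power2_eq_square power3_eq_cube)
  also have "\<dots> \<le> (Q * R)\<^sup>2" using assms(2,3) by (intro power_mono) simp_all
  also have "\<dots> = Q\<^sup>2 * R\<^sup>2" by (simp add: power_mult_distrib)
  also have "\<dots> \<le> Q\<^sup>2 * (P * (c * P\<^sup>2))" using assms(4) by (intro mult_left_mono) simp_all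
  also have "\<dots> = (c * Q\<^sup>2) * P ^ 3" by (simp add: power2_eq_square power3_eq_cube)
  finally show ?thesis by (rule mult_right_le_imp_le) (use \<open>P > 0\<close> in simp)
qed

lemma deg_le_L2_le_L1:
  assumes "deg_le k f"
  shows "cube_mean m (\<lambda>\<epsilon>. (f \<epsilon>)\<^sup>2) \<le> 9 ^ k * (cube_mean m (\<lambda>\<epsilon>. \<bar>f \<epsilon>\<bar>))\<^sup>2"
proof -
  define P where "P = cube_mean m (\<lambda>\<epsilon>. (f \<epsilon>)\<^sup>2)"
  define Q where "Q = cube_mean m (\<lambda>\<epsilon>. \<bar>f \<epsilon>\<bar>)"
  define R where "R = cube_mean m (\<lambda>\<epsilon>. \<bar>f \<epsilon>\<bar> ^ 3)"
  have s: "sqrt \<bar>x\<bar> * sqrt \<bar>x\<bar> = \<bar>x\<bar>" for x :: real by simp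
  \<comment> \<open>Cauchy-Schwarz twice, splitting \<open>f\<^sup>2 = |f|\<^sup>1\<^sup>/\<^sup>2 |f|\<^sup>3\<^sup>/\<^sup>2\<close> and \<open>|f|\<^sup>3 = |f| f\<^sup>2\<close>.\<close>
  have "P = cube_mean m (\<lambda>\<epsilon>. sqrt \<bar>f \<epsilon>\<bar> * (\<bar>f \<epsilon>\<bar> * sqrt \<bar>f \<epsilon>\<bar>))"
    unfolding P_def by (rule cube_mean_cong) (metis s mult.left_commute abs_mult_self_eq power2_eq_square)
  also have "(\<dots>)\<^sup>2 \<le> cube_mean m (\<lambda>\<epsilon>. (sqrt \<bar>f \<epsilon>\<bar>)\<^sup>2) * cube_mean m (\<lambda>\<epsilon>. (\<bar>f \<epsilon>\<bar> * sqrt \<bar>f \<epsilon>\<bar>)\<^sup>2)"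
    by (rule cube_mean_Cauchy_Schwarz)
  also have "\<dots> = Q * R"
  proof -
    have "(sqrt \<bar>x\<bar>)\<^sup>2 = \<bar>x\<bar>" for x :: real by (simp add: power2_eq_square)
    moreover have "(\<bar>x\<bar> * sqrt \<bar>x\<bar>)\<^sup>2 = \<bar>x\<bar> ^ 3" for x :: real
      by (metis s power2_eq_square power3_eq_cube mult.assoc mult.left_commute)
    ultimately show ?thesis unfolding Q_def R_def by presburger
  qed
  finally have PQR: "P\<^sup>2 \<le> Q * R" .
  have "R = cube_mean m (\<lambda>\<epsilon>. \<bar>f \<epsilon>\<bar> * (f \<epsilon>)\<^sup>2)"
    unfolding R_def by (rule cube_mean_cong) (simp add: power2_eq_square power3_eq_cube)
  also have "(\<dots>)\<^sup>2 \<le> cube_mean m (\<lambda>\<epsilon>. \<bar>f \<epsilon>\<bar>\<^sup>2) * cube_mean m (\<lambda>\<epsilon>. ((f \<epsilon>)\<^sup>2)\<^sup>2)"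
    by (rule cube_mean_Cauchy_Schwarz)
  also have "\<dots> = P * cube_mean m (\<lambda>\<epsilon>. f \<epsilon> ^ 4)"
    unfolding P_def by (simp add: power_mult[symmetric])
  also have "\<dots> \<le> P * (9 ^ k * P\<^sup>2)"
    unfolding P_def by (intro mult_left_mono bonami_lemma[OF assms]) (simp add: cube_mean_nonneg)
  finally have RPF: "R\<^sup>2 \<le> P * (9 ^ k * P\<^sup>2)" .
  show ?thesis
    using moment_interpolation[OF _ _ PQR RPF] unfolding P_def Q_def by (simp add: cube_mean_nonneg)
qed

lemma sum_abs_cube_deriv_le:
  assumes "deg_le k f"
  shows "(\<Sum>j<m. cube_mean m (\<lambda>\<epsilon>. \<bar>cube_deriv j f \<epsilon>\<bar>))
           \<le> 3 ^ k * sqrt (real k * real m) * cube_mean m (\<lambda>\<epsilon>. \<bar>f \<epsilon>\<bar>)"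
proof -
  define a where "a j = cube_mean m (\<lambda>\<epsilon>. \<bar>cube_deriv j f \<epsilon>\<bar>)" for j
  have aj: "(a j)\<^sup>2 \<le> cube_mean m (\<lambda>\<epsilon>. (cube_deriv j f \<epsilon>)\<^sup>2)" for j
    using cube_mean_Cauchy_Schwarz[of m "\<lambda>_. 1" "\<lambda>\<epsilon>. \<bar>cube_deriv j f \<epsilon>\<bar>"]
    unfolding a_def by (simp add: cube_mean_const)
  have "(\<Sum>j<m. a j)\<^sup>2 \<le> (\<Sum>j<m. 1\<^sup>2) * (\<Sum>j<m. (a j)\<^sup>2)"
    using Cauchy_Schwarz_ineq_sum[of "\<lambda>_. 1" a "{..<m}"] by simp
  also have "\<dots> \<le> real m * (\<Sum>j<m. cube_mean m (\<lambda>\<epsilon>. (cube_deriv j f \<epsilon>)\<^sup>2))"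
    by (simp add: sum_mono aj mult_left_mono)
  also have "\<dots> \<le> real m * (real k * (cube_mean m (\<lambda>\<epsilon>. (f \<epsilon>)\<^sup>2) - (cube_mean m f)\<^sup>2))"
    by (intro mult_left_mono total_influence_le[OF assms]) simp
  also have "\<dots> \<le> real m * (real k * cube_mean m (\<lambda>\<epsilon>. (f \<epsilon>)\<^sup>2))"
    by (intro mult_left_mono) simp_all
  also have "\<dots> \<le> real m * (real k * (9 ^ k * (cube_mean m (\<lambda>\<epsilon>. \<bar>f \<epsilon>\<bar>))\<^sup>2))"
    by (intro mult_left_mono deg_le_L2_le_L1[OF assms]) auto
  also have "\<dots> = (3 ^ k * sqrt (real k * real m) * cube_mean m (\<lambda>\<epsilon>. \<bar>f \<epsilon>\<bar>))\<^sup>2"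
    by (simp add: power_mult_distrib power_mult[symmetric] mult.commute[of k 2])
       (simp add: power_mult)
  finally show ?thesis
    unfolding a_def by (rule power2_le_imp_le) (simp add: cube_mean_nonneg)
qed


section \<open>Subsets and bijections of finite sets\<close>

lemma finite_ksets: "finite A \<Longrightarrow> finite (ksets A k)"
  unfolding ksets_def by (rule finite_subset[of _ "Pow A"]) auto

lemma card_ksets: "finite A \<Longrightarrow> card (ksets A k) = card A choose k"
  unfolding ksets_def by (rule n_subsets)

lemma ksets_0: "finite A \<Longrightarrow> ksets A 0 = {{}}"
  unfolding ksets_def by (auto dest: rev_finite_subset)

lemma ksets_image_bij:
  assumes b: "bij_betw \<pi> A B"
  shows "bij_betw (image \<pi>) (ksets A k) (ksets B k)"
proof -
  have inj: "inj_on \<pi> A" using b by (simp add: bij_betw_def)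
  have P: "bij_betw (image \<pi>) (Pow A) (Pow B)" using bij_betw_Pow[OF b] .
  have "inj_on (image \<pi>) (ksets A k)"
    using P by (rule bij_betw_imp_inj_on[THEN inj_on_subset]) (auto simp: ksets_def)
  moreover have "image \<pi> ` ksets A k = ksets B k"
  proof (intro equalityI subsetI)
    fix f assume "f \<in> image \<pi> ` ksets A k"
    then obtain e where e: "e \<subseteq> A" "card e = k" and f: "f = \<pi> ` e" by (auto simp: ksets_def)
    have "card f = k" unfolding f using e inj by (simp add: card_image inj_on_subset)
    moreover have "f \<subseteq> B" using e b f by (auto simp: bij_betw_def)
    ultimately show "f \<in> ksets B k" by (simp add: ksets_def)
  next
    fix f assume "f \<in> ksets B k"
    then have f: "f \<subseteq> B" "card f = k" by (auto simp: ksets_def)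
    then have "f \<in> image \<pi> ` Pow A" using P by (simp add: bij_betw_def)
    then obtain e where e: "e \<in> Pow A" "f = \<pi> ` e" by blast
    have "card e = k" using e f inj by (metis PowD card_image inj_on_subset)
    then show "f \<in> image \<pi> ` ksets A k" using e by (auto simp: ksets_def)
  qed
  ultimately show ?thesis by (simp add: bij_betw_def)
qed

lemma insert_ksets_bij:
  assumes "finite A" and "c \<in> A" and "d \<in> A" and "c \<noteq> d" and "k \<ge> 1"
  shows "bij_betw (insert c) (ksets (A - {c,d}) (k - 1)) {e \<in> ksets A k. c \<in> e \<and> d \<notin> e}"
proof (rule bij_betw_byWitness[where f'="\<lambda>e. e - {c}"])
  show "\<forall>g\<in>ksets (A - {c, d}) (k - 1). insert c g - {c} = g" by (auto simp: ksets_def)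
  show "\<forall>e\<in>{e \<in> ksets A k. c \<in> e \<and> d \<notin> e}. insert c (e - {c}) = e" by auto
  show "insert c ` ksets (A - {c, d}) (k - 1) \<subseteq> {e \<in> ksets A k. c \<in> e \<and> d \<notin> e}"
  proof
    fix e assume "e \<in> insert c ` ksets (A - {c, d}) (k - 1)"
    then obtain g where g: "g \<subseteq> A - {c,d}" "card g = k - 1" and e: "e = insert c g"
      by (auto simp: ksets_def)
    have "finite g" using g assms(1) finite_subset by blast
    moreover have "c \<notin> g" using g by auto
    ultimately have "card e = k" using g e assms(5) by simp
    then show "e \<in> {e \<in> ksets A k. c \<in> e \<and> d \<notin> e}" using g e assms by (auto simp: ksets_def)
  qed
  show "(\<lambda>e. e - {c}) ` {e \<in> ksets A k. c \<in> e \<and> d \<notin> e} \<subseteq> ksets (A - {c, d}) (k - 1)"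
  proof
    fix g assume "g \<in> (\<lambda>e. e - {c}) ` {e \<in> ksets A k. c \<in> e \<and> d \<notin> e}"
    then obtain e where e: "e \<subseteq> A" "card e = k" "c \<in> e" "d \<notin> e" and g: "g = e - {c}"
      by (auto simp: ksets_def)
    have "finite e" using e assms(1) finite_subset by blast
    then show "g \<in> ksets (A - {c, d}) (k - 1)" using e g by (auto simp: ksets_def)
  qed
qed

definition bijs :: "'a set \<Rightarrow> 'b set \<Rightarrow> ('a \<Rightarrow> 'b) set" where
  "bijs A B = {\<pi>. \<pi> \<in> extensional A \<and> bij_betw \<pi> A B}"

lemma restrict_in_bijs_iff: "restrict \<pi> A \<in> bijs A B \<longleftrightarrow> bij_betw \<pi> A B"
  unfolding bijs_def using bij_betw_cong[of A "restrict \<pi> A" \<pi> B] by simp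

lemma finite_bijs: "finite A \<Longrightarrow> finite B \<Longrightarrow> finite (bijs A B)"
  by (rule finite_subset[of _ "PiE A (\<lambda>_. B)"]) (auto simp: bijs_def bij_betw_def extensional_def intro: finite_PiE)

lemma bijs_comp_left:
  assumes \<rho>: "bij_betw \<rho> B C"
  shows "bij_betw (\<lambda>\<pi>. restrict (\<rho> \<circ> \<pi>) A) (bijs A B) (bijs A C)"
proof (rule bij_betw_byWitness[where f'="\<lambda>\<pi>. restrict (inv_into B \<rho> \<circ> \<pi>) A"])
  have inj: "inj_on \<rho> B" and img: "\<rho> ` B = C" using \<rho> by (simp_all add: bij_betw_def)
  show "\<forall>\<pi>\<in>bijs A B. restrict (inv_into B \<rho> \<circ> restrict (\<rho> \<circ> \<pi>) A) A = \<pi>"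
  proof (intro ballI ext)
    fix \<pi> z assume "\<pi> \<in> bijs A B"
    then have "\<pi> \<in> extensional A" and "bij_betw \<pi> A B" by (simp_all add: bijs_def)
    then show "restrict (inv_into B \<rho> \<circ> restrict (\<rho> \<circ> \<pi>) A) A z = \<pi> z"
      using inj by (cases "z \<in> A") (auto simp: extensional_def bij_betw_def inv_into_f_f)
  qed
  show "\<forall>\<pi>\<in>bijs A C. restrict (\<rho> \<circ> restrict (inv_into B \<rho> \<circ> \<pi>) A) A = \<pi>"
  proof (intro ballI ext)
    fix \<pi> z assume "\<pi> \<in> bijs A C"
    then have "\<pi> \<in> extensional A" and \<pi>: "bij_betw \<pi> A C" by (simp_all add: bijs_def)
    have "\<pi> z \<in> \<rho> ` B" if "z \<in> A" using \<pi> img that by (auto simp: bij_betw_def)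
    then show "restrict (\<rho> \<circ> restrict (inv_into B \<rho> \<circ> \<pi>) A) A z = \<pi> z"
      using \<open>\<pi> \<in> extensional A\<close> by (cases "z \<in> A") (auto simp: extensional_def f_inv_into_f)
  qed
  show "(\<lambda>\<pi>. restrict (\<rho> \<circ> \<pi>) A) ` bijs A B \<subseteq> bijs A C"
    using bij_betw_trans[OF _ \<rho>] by (auto simp: restrict_in_bijs_iff bijs_def)
  show "(\<lambda>\<pi>. restrict (inv_into B \<rho> \<circ> \<pi>) A) ` bijs A C \<subseteq> bijs A B"
    using bij_betw_trans[OF _ bij_betw_inv_into[OF \<rho>]] by (auto simp: restrict_in_bijs_iff bijs_def)
qed

lemma bijs_comp_right:
  assumes \<rho>: "bij_betw \<rho> C A"
  shows "bij_betw (\<lambda>\<pi>. restrict (\<pi> \<circ> \<rho>) C) (bijs A B) (bijs C B)"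
proof (rule bij_betw_byWitness[where f'="\<lambda>\<pi>. restrict (\<pi> \<circ> inv_into C \<rho>) A"])
  have \<rho>': "bij_betw (inv_into C \<rho>) A C" by (rule bij_betw_inv_into[OF \<rho>])
  have r1: "\<rho> z \<in> A" if "z \<in> C" for z using \<rho> that by (auto simp: bij_betw_def)
  have r2: "inv_into C \<rho> z \<in> C" if "z \<in> A" for z using \<rho>' that by (auto simp: bij_betw_def)
  have r3: "\<rho> (inv_into C \<rho> z) = z" if "z \<in> A" for z using \<rho> that by (simp add: bij_betw_def f_inv_into_f)
  have r4: "inv_into C \<rho> (\<rho> z) = z" if "z \<in> C" for z using \<rho> that by (simp add: bij_betw_def inv_into_f_f)
  show "\<forall>\<pi>\<in>bijs A B. restrict (restrict (\<pi> \<circ> \<rho>) C \<circ> inv_into C \<rho>) A = \<pi>"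
  proof (intro ballI ext)
    fix \<pi> z assume "\<pi> \<in> bijs A B"
    then show "restrict (restrict (\<pi> \<circ> \<rho>) C \<circ> inv_into C \<rho>) A z = \<pi> z"
      using r2 r3 by (cases "z \<in> A") (auto simp: bijs_def extensional_def)
  qed
  show "\<forall>\<pi>\<in>bijs C B. restrict (restrict (\<pi> \<circ> inv_into C \<rho>) A \<circ> \<rho>) C = \<pi>"
  proof (intro ballI ext)
    fix \<pi> z assume "\<pi> \<in> bijs C B"
    then show "restrict (restrict (\<pi> \<circ> inv_into C \<rho>) A \<circ> \<rho>) C z = \<pi> z"
      using r1 r4 by (cases "z \<in> C") (auto simp: bijs_def extensional_def)
  qed
  show "(\<lambda>\<pi>. restrict (\<pi> \<circ> \<rho>) C) ` bijs A B \<subseteq> bijs C B"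
    using bij_betw_trans[OF \<rho>] by (auto simp: restrict_in_bijs_iff bijs_def)
  show "(\<lambda>\<pi>. restrict (\<pi> \<circ> inv_into C \<rho>) A) ` bijs C B \<subseteq> bijs A B"
    using bij_betw_trans[OF \<rho>'] by (auto simp: restrict_in_bijs_iff bijs_def)
qed

lemma bij_betw_restrict_permutes: "bij_betw (\<lambda>\<pi>. restrict \<pi> V) {\<pi>. \<pi> permutes V} (bijs V V)"
proof (rule bij_betw_byWitness[where f'="\<lambda>\<sigma> z. if z \<in> V then \<sigma> z else z"])
  show "\<forall>\<pi>\<in>{\<pi>. \<pi> permutes V}. (\<lambda>z. if z \<in> V then restrict \<pi> V z else z) = \<pi>"
    using permutes_not_in by fastforce
  show "\<forall>\<sigma>\<in>bijs V V. restrict (\<lambda>z. if z \<in> V then \<sigma> z else z) V = \<sigma>"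
  proof (intro ballI ext)
    fix \<sigma> z assume "\<sigma> \<in> bijs V V"
    then show "restrict (\<lambda>z. if z \<in> V then \<sigma> z else z) V z = \<sigma> z"
      by (cases "z \<in> V") (auto simp: bijs_def extensional_def)
  qed
  show "(\<lambda>\<pi>. restrict \<pi> V) ` {\<pi>. \<pi> permutes V} \<subseteq> bijs V V"
    by (auto simp: restrict_in_bijs_iff permutes_imp_bij)
  show "(\<lambda>\<sigma> z. if z \<in> V then \<sigma> z else z) ` bijs V V \<subseteq> {\<pi>. \<pi> permutes V}"
  proof
    fix \<pi> assume "\<pi> \<in> (\<lambda>\<sigma> z. if z \<in> V then \<sigma> z else z) ` bijs V V"
    then obtain \<sigma> where "bij_betw \<sigma> V V" and \<pi>: "\<pi> = (\<lambda>z. if z \<in> V then \<sigma> z else z)"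
      by (auto simp: bijs_def)
    then have "bij_betw \<pi> V V" using bij_betw_cong[of V \<pi> \<sigma> V] by (simp add: \<pi>)
    then show "\<pi> \<in> {\<pi>. \<pi> permutes V}" by (simp add: \<pi> bij_imp_permutes)
  qed
qed

lemma card_bijs:
  assumes "finite A" and "finite B" and "card A = card B"
  shows "card (bijs A B) = fact (card A)"
proof -
  obtain \<beta> where "bij_betw \<beta> A B" using finite_same_card_bij[OF assms] by blast
  then have "card (bijs A B) = card (bijs A A)"
    by (metis bij_betw_same_card bijs_comp_left)
  also have "\<dots> = card {\<pi>. \<pi> permutes A}"
    by (metis bij_betw_same_card bij_betw_restrict_permutes)
  finally show ?thesis using card_permutations[OF refl assms(1)] by simp
qed

lemma sum_bijs_comp_left:
  "bij_betw \<rho> B B \<Longrightarrow> (\<Sum>\<pi>\<in>bijs A B. G (restrict (\<rho> \<circ> \<pi>) A)) = (\<Sum>\<pi>\<in>bijs A B. G \<pi>)"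
  using sum.reindex_bij_betw[OF bijs_comp_left] .

lemma sum_bijs_comp_right:
  "bij_betw \<rho> A A \<Longrightarrow> (\<Sum>\<pi>\<in>bijs A B. G (restrict (\<pi> \<circ> \<rho>) A)) = (\<Sum>\<pi>\<in>bijs A B. G \<pi>)"
  using sum.reindex_bij_betw[OF bijs_comp_right] .

definition distinct_pairs :: "'a set \<Rightarrow> ('a \<times> 'a) set" where
  "distinct_pairs A = {(x,y). x \<in> A \<and> y \<in> A \<and> x \<noteq> y}"

lemma finite_distinct_pairs: "finite A \<Longrightarrow> finite (distinct_pairs A)"
  by (rule finite_subset[of _ "A \<times> A"]) (auto simp: distinct_pairs_def)

lemma card_Diff_pair: "finite A \<Longrightarrow> (a, b) \<in> distinct_pairs A \<Longrightarrow> card (A - {a,b}) = card A - 2"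
  by (simp add: distinct_pairs_def card_Diff_subset)

lemma bij_betw_inv_into_eq_iff:
  "bij_betw \<pi> A B \<Longrightarrow> a \<in> A \<Longrightarrow> x \<in> B \<Longrightarrow> inv_into A \<pi> x = a \<longleftrightarrow> \<pi> a = x"
  unfolding bij_betw_def by (auto simp: inv_into_f_f f_inv_into_f inj_on_def)

lemma bijs_fibre_bij:
  assumes a: "a \<in> A" and b: "b \<in> A" and ab: "a \<noteq> b" and x: "x \<in> B" and y: "y \<in> B" and xy: "x \<noteq> y"
  shows "bij_betw (\<lambda>\<sigma>. restrict (\<sigma>(a:=x, b:=y)) A) (bijs (A - {a,b}) (B - {x,y}))
           {\<pi> \<in> bijs A B. \<pi> a = x \<and> \<pi> b = y}"
proof (rule bij_betw_byWitness[where f'="\<lambda>\<pi>. restrict \<pi> (A - {a,b})"])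
  show "\<forall>\<sigma>\<in>bijs (A - {a,b}) (B - {x,y}). restrict (restrict (\<sigma>(a:=x, b:=y)) A) (A - {a,b}) = \<sigma>"
  proof (intro ballI ext)
    fix \<sigma> z assume "\<sigma> \<in> bijs (A - {a,b}) (B - {x,y})"
    then show "restrict (restrict (\<sigma>(a:=x, b:=y)) A) (A - {a,b}) z = \<sigma> z"
      by (cases "z \<in> A - {a,b}") (auto simp: bijs_def extensional_def)
  qed
  show "\<forall>\<pi>\<in>{\<pi> \<in> bijs A B. \<pi> a = x \<and> \<pi> b = y}. restrict ((restrict \<pi> (A - {a,b}))(a:=x, b:=y)) A = \<pi>"
  proof (intro ballI ext)
    fix \<pi> z assume "\<pi> \<in> {\<pi> \<in> bijs A B. \<pi> a = x \<and> \<pi> b = y}"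
    then show "restrict ((restrict \<pi> (A - {a,b}))(a:=x, b:=y)) A z = \<pi> z"
      by (cases "z \<in> A") (auto simp: bijs_def extensional_def)
  qed
  show "(\<lambda>\<sigma>. restrict (\<sigma>(a:=x, b:=y)) A) ` bijs (A - {a,b}) (B - {x,y}) \<subseteq> {\<pi> \<in> bijs A B. \<pi> a = x \<and> \<pi> b = y}"
  proof clarify
    fix \<sigma> assume "\<sigma> \<in> bijs (A - {a,b}) (B - {x,y})"
    then have "bij_betw (\<sigma>(a:=x, b:=y)) (A - {a,b}) (B - {x,y})"
      using bij_betw_cong[of "A - {a,b}" "\<sigma>(a:=x, b:=y)" \<sigma>] by (simp add: bijs_def)
    moreover have "bij_betw (\<sigma>(a:=x, b:=y)) {a,b} {x,y}"
      using ab xy by (auto simp: bij_betw_def)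
    ultimately have "bij_betw (\<sigma>(a:=x, b:=y)) ((A - {a,b}) \<union> {a,b}) ((B - {x,y}) \<union> {x,y})"
      by (rule bij_betw_combine) simp
    moreover have "(A - {a,b}) \<union> {a,b} = A" and "(B - {x,y}) \<union> {x,y} = B" using a b x y by auto
    ultimately show "restrict (\<sigma>(a:=x, b:=y)) A \<in> bijs A B
        \<and> restrict (\<sigma>(a:=x, b:=y)) A a = x \<and> restrict (\<sigma>(a:=x, b:=y)) A b = y"
      using a b ab by (simp add: restrict_in_bijs_iff)
  qed
  show "(\<lambda>\<pi>. restrict \<pi> (A - {a,b})) ` {\<pi> \<in> bijs A B. \<pi> a = x \<and> \<pi> b = y} \<subseteq> bijs (A - {a,b}) (B - {x,y})"
  proof clarify
    fix \<pi> assume "\<pi> \<in> bijs A B" and xy_def: "x = \<pi> a" "y = \<pi> b"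
    then have bij: "bij_betw \<pi> A B" by (simp add: bijs_def)
    have "\<pi> ` (A - {a,b}) = \<pi> ` A - \<pi> ` {a,b}"
      using a b bij by (intro inj_on_image_set_diff) (auto simp: bij_betw_def)
    then have "\<pi> ` (A - {a,b}) = B - {x,y}" using bij xy_def by (simp add: bij_betw_def)
    then have "bij_betw \<pi> (A - {a,b}) (B - {x,y})" by (rule bij_betw_subset[OF bij Diff_subset])
    then show "restrict \<pi> (A - {a,b}) \<in> bijs (A - {a,b}) (B - {\<pi> a, \<pi> b})"
      unfolding xy_def[symmetric] restrict_in_bijs_iff .
  qed
qed

lemma sum_bijs_fibre:
  assumes "a \<in> A" "b \<in> A" "a \<noteq> b" "x \<in> B" "y \<in> B" "x \<noteq> y"
  shows "(\<Sum>\<pi>\<in>{\<pi> \<in> bijs A B. \<pi> a = x \<and> \<pi> b = y}. G \<pi>)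
           = (\<Sum>\<sigma>\<in>bijs (A - {a,b}) (B - {x,y}). G (restrict (\<sigma>(a:=x, b:=y)) A))"
  using sum.reindex_bij_betw[OF bijs_fibre_bij[OF assms], of G] by simp

lemma sum_bijs_by_images:
  assumes fA: "finite A" and fB: "finite B" and "a \<in> A" "b \<in> A" "a \<noteq> b"
  shows "(\<Sum>\<pi>\<in>bijs A B. G \<pi>) =
         (\<Sum>p\<in>distinct_pairs B. \<Sum>\<sigma>\<in>bijs (A - {a,b}) (B - {fst p, snd p}).
            G (restrict (\<sigma>(a := fst p, b := snd p)) A))"
proof -
  have "(\<lambda>\<pi>. (\<pi> a, \<pi> b)) ` bijs A B \<subseteq> distinct_pairs B"
    using assms by (auto simp: bijs_def bij_betw_def distinct_pairs_def inj_on_def)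
  then have "(\<Sum>\<pi>\<in>bijs A B. G \<pi>)
      = (\<Sum>p\<in>distinct_pairs B. \<Sum>\<pi>\<in>{\<pi> \<in> bijs A B. (\<pi> a, \<pi> b) = p}. G \<pi>)"
    by (rule sum.group[OF finite_bijs[OF fA fB] finite_distinct_pairs[OF fB], symmetric])
  also have "\<dots> = (\<Sum>p\<in>distinct_pairs B. \<Sum>\<sigma>\<in>bijs (A - {a,b}) (B - {fst p, snd p}).
            G (restrict (\<sigma>(a := fst p, b := snd p)) A))"
  proof (rule sum.cong[OF refl])
    fix p assume "p \<in> distinct_pairs B"
    then show "(\<Sum>\<pi>\<in>{\<pi> \<in> bijs A B. (\<pi> a, \<pi> b) = p}. G \<pi>) = (\<Sum>\<sigma>\<in>bijs (A - {a,b}) (B - {fst p, snd p}).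
            G (restrict (\<sigma>(a := fst p, b := snd p)) A))"
      using sum_bijs_fibre[of a A b "fst p" B "snd p"] assms
      by (auto simp: distinct_pairs_def prod_eq_iff)
  qed
  finally show ?thesis .
qed

lemma sum_bijs_by_preimages:
  assumes fA: "finite A" and fB: "finite B" and "x \<in> B" "y \<in> B" "x \<noteq> y"
  shows "(\<Sum>\<pi>\<in>bijs A B. G \<pi>) =
         (\<Sum>p\<in>distinct_pairs A. \<Sum>\<sigma>\<in>bijs (A - {fst p, snd p}) (B - {x,y}).
            G (restrict (\<sigma>(fst p := x, snd p := y)) A))"
proof -
  let ?pre = "\<lambda>\<pi>. (inv_into A \<pi> x, inv_into A \<pi> y)"
  have "?pre ` bijs A B \<subseteq> distinct_pairs A"
  proof clarify
    fix \<pi> assume "\<pi> \<in> bijs A B"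
    then have "bij_betw (inv_into A \<pi>) B A" by (simp add: bijs_def bij_betw_inv_into)
    then show "?pre \<pi> \<in> distinct_pairs A"
      using assms by (auto simp: distinct_pairs_def bij_betw_def inj_on_def)
  qed
  then have "(\<Sum>\<pi>\<in>bijs A B. G \<pi>)
      = (\<Sum>p\<in>distinct_pairs A. \<Sum>\<pi>\<in>{\<pi> \<in> bijs A B. ?pre \<pi> = p}. G \<pi>)"
    by (rule sum.group[OF finite_bijs[OF fA fB] finite_distinct_pairs[OF fA], symmetric])
  also have "\<dots> = (\<Sum>p\<in>distinct_pairs A. \<Sum>\<sigma>\<in>bijs (A - {fst p, snd p}) (B - {x,y}).
            G (restrict (\<sigma>(fst p := x, snd p := y)) A))"
  proof (rule sum.cong[OF refl])
    fix p assume p: "p \<in> distinct_pairs A"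
    have "{\<pi> \<in> bijs A B. ?pre \<pi> = p} = {\<pi> \<in> bijs A B. \<pi> (fst p) = x \<and> \<pi> (snd p) = y}"
      using p assms by (auto simp: bijs_def distinct_pairs_def prod_eq_iff bij_betw_inv_into_eq_iff)
    then show "(\<Sum>\<pi>\<in>{\<pi> \<in> bijs A B. ?pre \<pi> = p}. G \<pi>) = (\<Sum>\<sigma>\<in>bijs (A - {fst p, snd p}) (B - {x,y}).
            G (restrict (\<sigma>(fst p := x, snd p := y)) A))"
      using sum_bijs_fibre[of "fst p" A "snd p" x B y] p assms by (auto simp: distinct_pairs_def)
  qed
  finally show ?thesis .
qed

lemma sum_bijs_pair_image:
  assumes fB: "finite B" and ab: "(a, b) \<in> distinct_pairs B"
  shows "(\<Sum>\<rho>\<in>bijs B B. g (\<rho> a) (\<rho> b)) = fact (card B - 2) * (\<Sum>p\<in>distinct_pairs B. g (fst p) (snd p))"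
proof -
  have a: "a \<in> B" "b \<in> B" "a \<noteq> b" using ab by (auto simp: distinct_pairs_def)
  have "(\<Sum>\<rho>\<in>bijs B B. g (\<rho> a) (\<rho> b))
      = (\<Sum>p\<in>distinct_pairs B. \<Sum>\<sigma>\<in>bijs (B - {a,b}) (B - {fst p, snd p}). g (fst p) (snd p))"
    using sum_bijs_by_images[OF fB fB a, of "\<lambda>\<rho>. g (\<rho> a) (\<rho> b)"] a by simp
  also have "\<dots> = (\<Sum>p\<in>distinct_pairs B. fact (card B - 2) * g (fst p) (snd p))"
  proof (rule sum.cong[OF refl])
    fix p assume "p \<in> distinct_pairs B"
    then have "card (bijs (B - {a,b}) (B - {fst p, snd p})) = fact (card B - 2)"
      using card_bijs[of "B - {a,b}" "B - {fst p, snd p}"] card_Diff_pair[OF fB ab]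
        card_Diff_pair[OF fB, of "fst p" "snd p"] fB by simp
    then show "(\<Sum>\<sigma>\<in>bijs (B - {a,b}) (B - {fst p, snd p}). g (fst p) (snd p))
        = fact (card B - 2) * g (fst p) (snd p)" by simp
  qed
  finally show ?thesis by (simp add: sum_distrib_left)
qed

section \<open>The inner product along a bijection\<close>

definition bij_inner :: "nat \<Rightarrow> 'a set \<Rightarrow> ('a set \<Rightarrow> real) \<Rightarrow> ('b set \<Rightarrow> real) \<Rightarrow> ('a \<Rightarrow> 'b) \<Rightarrow> real" where
  "bij_inner k A w u \<pi> = (\<Sum>e\<in>ksets A k. w e * u (\<pi> ` e))"

lemma bij_inner_cong: "(\<And>z. z \<in> A \<Longrightarrow> \<pi> z = \<pi>' z) \<Longrightarrow> bij_inner k A w u \<pi> = bij_inner k A w u \<pi>'"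
  unfolding bij_inner_def ksets_def
  by (intro sum.cong refl arg_cong2[where f="(*)"] arg_cong[where f=u] image_cong) auto

lemma hyp_inner_eq_bij_inner:
  assumes "\<pi> permutes V"
  shows "hyp_inner V k (perm_weight \<pi> w) u = bij_inner k V w u (restrict \<pi> V)"
proof -
  have inv: "inv \<pi> ` \<pi> ` e = e" for e
    using permutes_inj[OF assms] by (simp add: image_comp)
  have "hyp_inner V k (perm_weight \<pi> w) u = (\<Sum>e\<in>ksets V k. w (inv \<pi> ` e) * u e)"
    unfolding hyp_inner_def perm_weight_def ..
  also have "\<dots> = (\<Sum>e\<in>ksets V k. w (inv \<pi> ` \<pi> ` e) * u (\<pi> ` e))"
    by (rule sum.reindex_bij_betw[OF ksets_image_bij[OF permutes_imp_bij[OF assms]], symmetric])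
  also have "\<dots> = bij_inner k V w u \<pi>"
    unfolding inv bij_inner_def ..
  also have "\<dots> = bij_inner k V w u (restrict \<pi> V)"
    by (rule bij_inner_cong) simp
  finally show ?thesis .
qed

lemma sum_permutes_abs_hyp_inner:
  "(\<Sum>\<pi>\<in>{\<pi>. \<pi> permutes V}. \<bar>hyp_inner V k (perm_weight \<pi> w) u\<bar>) = (\<Sum>\<sigma>\<in>bijs V V. \<bar>bij_inner k V w u \<sigma>\<bar>)"
proof -
  have "(\<Sum>\<pi>\<in>{\<pi>. \<pi> permutes V}. \<bar>hyp_inner V k (perm_weight \<pi> w) u\<bar>)
      = (\<Sum>\<pi>\<in>{\<pi>. \<pi> permutes V}. \<bar>bij_inner k V w u (restrict \<pi> V)\<bar>)"
    by (simp add: hyp_inner_eq_bij_inner)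
  also have "\<dots> = (\<Sum>\<sigma>\<in>bijs V V. \<bar>bij_inner k V w u \<sigma>\<bar>)"
    by (rule sum.reindex_bij_betw[OF bij_betw_restrict_permutes])
  finally show ?thesis .
qed

lemma ex_permutation_image_eq:
  assumes "finite A" and "e \<in> ksets A k" and "e' \<in> ksets A k"
  obtains \<rho> where "bij_betw \<rho> A A" and "\<rho> ` e = e'"
proof -
  have eA: "e \<subseteq> A" "e' \<subseteq> A" "card e = card e'" using assms(2,3) by (auto simp: ksets_def)
  have fe: "finite e" "finite e'" using eA assms(1) finite_subset by auto
  obtain \<rho>1 where r1: "bij_betw \<rho>1 e e'" using finite_same_card_bij[OF fe eA(3)] by blast
  have "card (A - e) = card (A - e')" using eA fe assms(1) by (simp add: card_Diff_subset)
  then obtain \<rho>2 where r2: "bij_betw \<rho>2 (A - e) (A - e')"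
    using finite_same_card_bij[of "A - e" "A - e'"] assms(1) by auto
  define \<rho> where "\<rho> z = (if z \<in> e then \<rho>1 z else \<rho>2 z)" for z
  have b1: "bij_betw \<rho> e e'" using r1 by (rule bij_betw_cong[THEN iffD1, rotated]) (simp add: \<rho>_def)
  have b2: "bij_betw \<rho> (A - e) (A - e')" using r2 by (rule bij_betw_cong[THEN iffD1, rotated]) (simp add: \<rho>_def)
  have "bij_betw \<rho> (e \<union> (A - e)) (e' \<union> (A - e'))" by (rule bij_betw_combine[OF b1 b2]) auto
  moreover have "e \<union> (A - e) = A" "e' \<union> (A - e') = A" using eA by auto
  ultimately have "bij_betw \<rho> A A" by simp
  moreover have "\<rho> ` e = e'" using b1 by (simp add: bij_betw_def)
  ultimately show ?thesis by (rule that)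
qed

lemma sum_bijs_image_ksets_const:
  fixes u :: "'b set \<Rightarrow> real"
  assumes "finite A" and e: "e \<in> ksets A k" and e': "e' \<in> ksets A k"
  shows "(\<Sum>\<pi>\<in>bijs A B. u (\<pi> ` e')) = (\<Sum>\<pi>\<in>bijs A B. u (\<pi> ` e))"
proof -
  obtain \<rho> where \<rho>: "bij_betw \<rho> A A" and img: "\<rho> ` e = e'"
    using ex_permutation_image_eq[OF assms] .
  have eqs: "restrict (\<pi> \<circ> \<rho>) A ` e = \<pi> ` e'" for \<pi> :: "'a \<Rightarrow> 'b"
    using e img[symmetric] by (auto simp: ksets_def)
  have "(\<Sum>\<pi>\<in>bijs A B. u (\<pi> ` e')) = (\<Sum>\<pi>\<in>bijs A B. u (restrict (\<pi> \<circ> \<rho>) A ` e))"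
    by (simp only: eqs)
  also have "\<dots> = (\<Sum>\<pi>\<in>bijs A B. u (\<pi> ` e))" by (rule sum_bijs_comp_right[OF \<rho>])
  finally show ?thesis .
qed

lemma sum_bij_inner:
  assumes fA: "finite A" and fB: "finite B" and cA: "card A = n" and cB: "card B = n" and kn: "k \<le> n"
  shows "(\<Sum>\<pi>\<in>bijs A B. bij_inner k A w u \<pi>)
           = fact n / real (n choose k) * (\<Sum>e\<in>ksets A k. w e) * (\<Sum>f\<in>ksets B k. u f)"
proof -
  define c where "c e = (\<Sum>\<pi>\<in>bijs A B. u (\<pi> ` e))" for e
  have cK: "card (ksets A k) = n choose k" using card_ksets[OF fA] cA by simp
  then have "ksets A k \<noteq> {}" using kn by (metis card.empty zero_less_binomial_iff less_irrefl)
  then obtain e0 where e0: "e0 \<in> ksets A k" by blast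
  have const: "c e = c e0" if "e \<in> ksets A k" for e
    unfolding c_def by (rule sum_bijs_image_ksets_const[OF fA e0 that])
  have "real (n choose k) * c e0 = (\<Sum>e\<in>ksets A k. c e)"
    using const cK by simp
  also have "\<dots> = (\<Sum>\<pi>\<in>bijs A B. \<Sum>e\<in>ksets A k. u (\<pi> ` e))"
    unfolding c_def by (rule sum.swap)
  also have "\<dots> = (\<Sum>\<pi>\<in>bijs A B. \<Sum>f\<in>ksets B k. u f)"
    by (intro sum.cong refl sum.reindex_bij_betw ksets_image_bij) (simp add: bijs_def)
  also have "\<dots> = fact n * (\<Sum>f\<in>ksets B k. u f)" using card_bijs[OF fA fB] cA cB by simp
  finally have ce0: "c e0 = fact n * (\<Sum>f\<in>ksets B k. u f) / real (n choose k)"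
    using kn by (simp add: field_simps)
  have "(\<Sum>\<pi>\<in>bijs A B. bij_inner k A w u \<pi>) = (\<Sum>e\<in>ksets A k. w e * c e)"
    unfolding bij_inner_def c_def by (subst sum.swap) (simp add: sum_distrib_left)
  also have "\<dots> = (\<Sum>e\<in>ksets A k. w e) * c e0" using const by (simp add: sum_distrib_right)
  finally show ?thesis unfolding ce0 by simp
qed

lemma sum_split_by_pair:
  assumes "finite K"
  shows "(\<Sum>e\<in>K. \<phi> e) = (\<Sum>e\<in>{e\<in>K. a \<in> e \<and> b \<notin> e}. \<phi> e) + (\<Sum>e\<in>{e\<in>K. b \<in> e \<and> a \<notin> e}. \<phi> e)
                          + (\<Sum>e\<in>{e\<in>K. a \<in> e \<longleftrightarrow> b \<in> e}. \<phi> e)"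
proof -
  have "K = {e\<in>K. a \<in> e \<and> b \<notin> e} \<union> {e\<in>K. b \<in> e \<and> a \<notin> e} \<union> {e\<in>K. a \<in> e \<longleftrightarrow> b \<in> e}" by blast
  then have "(\<Sum>e\<in>K. \<phi> e) = (\<Sum>e\<in>{e\<in>K. a \<in> e \<and> b \<notin> e} \<union> {e\<in>K. b \<in> e \<and> a \<notin> e} \<union> {e\<in>K. a \<in> e \<longleftrightarrow> b \<in> e}. \<phi> e)"
    by simp
  also have "\<dots> = (\<Sum>e\<in>{e\<in>K. a \<in> e \<and> b \<notin> e} \<union> {e\<in>K. b \<in> e \<and> a \<notin> e}. \<phi> e) + (\<Sum>e\<in>{e\<in>K. a \<in> e \<longleftrightarrow> b \<in> e}. \<phi> e)"
    by (rule sum.union_disjoint) (use assms in auto)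
  also have "(\<Sum>e\<in>{e\<in>K. a \<in> e \<and> b \<notin> e} \<union> {e\<in>K. b \<in> e \<and> a \<notin> e}. \<phi> e)
      = (\<Sum>e\<in>{e\<in>K. a \<in> e \<and> b \<notin> e}. \<phi> e) + (\<Sum>e\<in>{e\<in>K. b \<in> e \<and> a \<notin> e}. \<phi> e)"
    by (rule sum.union_disjoint) (use assms in auto)
  finally show ?thesis .
qed

abbreviation diff_weight :: "('a set \<Rightarrow> real) \<Rightarrow> 'a \<Rightarrow> 'a \<Rightarrow> 'a set \<Rightarrow> real" where
  "diff_weight w x y \<equiv> \<lambda>e. w (insert x e) - w (insert y e)"

lemma bij_inner_transpose_diff:
  assumes fA: "finite A" and b: "bij_betw \<pi> A B" and a: "a \<in> A" and bb: "b \<in> A" and ab: "a \<noteq> b"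
      and x: "\<pi> a = x" and y: "\<pi> b = y" and k: "k \<ge> 1"
  shows "bij_inner k A w u \<pi> - bij_inner k A w u (Transposition.transpose x y \<circ> \<pi>) =
         bij_inner (k - 1) (A - {a,b}) (diff_weight w a b) (diff_weight u x y) \<pi>"
proof -
  let ?T = "Transposition.transpose x y"
  let ?K = "ksets A k"
  let ?K' = "ksets (A - {a,b}) (k - 1)"
  define \<phi> where "\<phi> e = w e * (u (\<pi> ` e) - u (?T ` \<pi> ` e))" for e
  have inj: "inj_on \<pi> A" using b by (simp add: bij_betw_def)
  have mem: "\<pi> z \<in> \<pi> ` e \<longleftrightarrow> z \<in> e" if "e \<subseteq> A" "z \<in> A" for e z
    using inj that by (auto simp: inj_on_def)
  have "bij_inner k A w u \<pi> - bij_inner k A w u (?T \<circ> \<pi>) = (\<Sum>e\<in>?K. \<phi> e)"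
    unfolding bij_inner_def \<phi>_def by (simp add: sum_subtractf[symmetric] right_diff_distrib image_comp)
  also have "\<dots> = (\<Sum>e\<in>{e\<in>?K. a \<in> e \<and> b \<notin> e}. \<phi> e) + (\<Sum>e\<in>{e\<in>?K. b \<in> e \<and> a \<notin> e}. \<phi> e)
                 + (\<Sum>e\<in>{e\<in>?K. (a \<in> e \<longleftrightarrow> b \<in> e)}. \<phi> e)"
    by (rule sum_split_by_pair[OF finite_ksets[OF fA]])
  also have "(\<Sum>e\<in>{e\<in>?K. (a \<in> e \<longleftrightarrow> b \<in> e)}. \<phi> e) = 0"
  proof (rule sum.neutral, rule ballI)
    fix e assume "e \<in> {e\<in>?K. (a \<in> e \<longleftrightarrow> b \<in> e)}"
    then have e: "e \<subseteq> A" "a \<in> e \<longleftrightarrow> b \<in> e" by (auto simp: ksets_def)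
    then have "x \<in> \<pi> ` e \<longleftrightarrow> y \<in> \<pi> ` e" using mem[OF e(1) a] mem[OF e(1) bb] x y by simp
    then have "?T ` \<pi> ` e = \<pi> ` e" by simp
    then show "\<phi> e = 0" unfolding \<phi>_def by simp
  qed
  also have "(\<Sum>e\<in>{e\<in>?K. a \<in> e \<and> b \<notin> e}. \<phi> e) = (\<Sum>g\<in>?K'. \<phi> (insert a g))"
    by (rule sum.reindex_bij_betw[OF insert_ksets_bij[OF fA a bb ab k], symmetric])
  also have "(\<Sum>e\<in>{e\<in>?K. b \<in> e \<and> a \<notin> e}. \<phi> e) = (\<Sum>g\<in>?K'. \<phi> (insert b g))"
  proof -
    have "{b, a} = {a, b}" by auto
    then show ?thesis
      using sum.reindex_bij_betw[OF insert_ksets_bij[OF fA bb a ab[symmetric] k], symmetric, of \<phi>] by simp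
  qed
  also have "(\<Sum>g\<in>?K'. \<phi> (insert a g)) + (\<Sum>g\<in>?K'. \<phi> (insert b g)) + 0 =
      (\<Sum>g\<in>?K'. (w (insert a g) - w (insert b g)) * (u (insert x (\<pi> ` g)) - u (insert y (\<pi> ` g))))"
  proof -
    have "\<phi> (insert a g) + \<phi> (insert b g) = (w (insert a g) - w (insert b g)) * (u (insert x (\<pi> ` g)) - u (insert y (\<pi> ` g)))"
      if g: "g \<in> ?K'" for g
    proof -
      have gA: "g \<subseteq> A - {a,b}" using g by (auto simp: ksets_def)
      have nx: "x \<notin> \<pi> ` g" and ny: "y \<notin> \<pi> ` g"
        using mem[of g a] mem[of g b] gA a bb x y by auto
      have Tg: "?T ` \<pi> ` g = \<pi> ` g" using nx ny by simp
      have T1: "?T ` \<pi> ` insert a g = insert y (\<pi> ` g)" using Tg x by (simp add: image_insert)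
      have T2: "?T ` \<pi> ` insert b g = insert x (\<pi> ` g)" using Tg y by (simp add: image_insert)
      show ?thesis unfolding \<phi>_def T1 T2 using x y by (simp add: algebra_simps)
    qed
    then show ?thesis by (simp add: sum.distrib[symmetric])
  qed
  also have "\<dots> = bij_inner (k - 1) (A - {a,b}) (diff_weight w a b) (diff_weight u x y) \<pi>"
    unfolding bij_inner_def ..
  finally show ?thesis .
qed



section \<open>Disjoint transpositions\<close>

text \<open>For pairwise disjoint pairs the transpositions commute, and \<open>swaps X Y m \<epsilon>\<close> exchanges \<open>X l\<close>
  and \<open>Y l\<close> exactly for those \<open>l < m\<close> with \<open>\<epsilon> l\<close>: it is the action of the cube \<open>cube m\<close>.\<close>

fun swaps :: "(nat \<Rightarrow> 'a) \<Rightarrow> (nat \<Rightarrow> 'a) \<Rightarrow> nat \<Rightarrow> (nat \<Rightarrow> bool) \<Rightarrow> 'a \<Rightarrow> 'a" where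
  "swaps X Y 0 \<epsilon> = id"
| "swaps X Y (Suc m) \<epsilon> = (if \<epsilon> m then Transposition.transpose (X m) (Y m) else id) \<circ> swaps X Y m \<epsilon>"

definition disjoint_swaps :: "(nat \<Rightarrow> 'a) \<Rightarrow> (nat \<Rightarrow> 'a) \<Rightarrow> nat \<Rightarrow> bool" where
  "disjoint_swaps X Y m \<longleftrightarrow> (\<forall>l<m. \<forall>l'<m. X l \<noteq> Y l' \<and> (X l = X l' \<longrightarrow> l = l') \<and> (Y l = Y l' \<longrightarrow> l = l'))"

lemma disjoint_swapsD: "disjoint_swaps X Y m \<Longrightarrow> l < m \<Longrightarrow> l' < m \<Longrightarrow> X l \<noteq> Y l' \<and> (l \<noteq> l' \<longrightarrow> X l \<noteq> X l' \<and> Y l \<noteq> Y l')"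
  unfolding disjoint_swaps_def by blast

lemma disjoint_swaps_Suc: "disjoint_swaps X Y (Suc m) \<Longrightarrow> disjoint_swaps X Y m"
  unfolding disjoint_swaps_def by simp

lemma swaps_char:
  assumes "disjoint_swaps X Y m"
  shows "(\<forall>l<m. swaps X Y m \<epsilon> (X l) = (if \<epsilon> l then Y l else X l) \<and> swaps X Y m \<epsilon> (Y l) = (if \<epsilon> l then X l else Y l))
       \<and> (\<forall>z. (\<forall>l<m. z \<noteq> X l \<and> z \<noteq> Y l) \<longrightarrow> swaps X Y m \<epsilon> z = z)"
  using assms
proof (induction m)
  case 0
  then show ?case by simp
next
  case (Suc m)
  have d: "disjoint_swaps X Y (Suc m)" using Suc.prems .
  have IH: "(\<forall>l<m. swaps X Y m \<epsilon> (X l) = (if \<epsilon> l then Y l else X l) \<and> swaps X Y m \<epsilon> (Y l) = (if \<epsilon> l then X l else Y l))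
       \<and> (\<forall>z. (\<forall>l<m. z \<noteq> X l \<and> z \<noteq> Y l) \<longrightarrow> swaps X Y m \<epsilon> z = z)"
    using Suc.IH[OF disjoint_swaps_Suc[OF d]] .
  let ?T = "(if \<epsilon> m then Transposition.transpose (X m) (Y m) else id)"
  have fixT: "?T z = z" if "z \<noteq> X m" "z \<noteq> Y m" for z using that by simp
  have dm: "\<forall>l<m. X l \<noteq> X m \<and> X l \<noteq> Y m \<and> Y l \<noteq> X m \<and> Y l \<noteq> Y m"
  proof (intro allI impI)
    fix l assume l: "l < m"
    have l1: "l < Suc m" "m < Suc m" "l \<noteq> m" "m \<noteq> l" using l by auto
    have h1: "X l \<noteq> Y m \<and> (l \<noteq> m \<longrightarrow> X l \<noteq> X m \<and> Y l \<noteq> Y m)" by (rule disjoint_swapsD[OF d l1(1) l1(2)])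
    have h2: "X m \<noteq> Y l" using disjoint_swapsD[OF d l1(2) l1(1)] by simp
    show "X l \<noteq> X m \<and> X l \<noteq> Y m \<and> Y l \<noteq> X m \<and> Y l \<noteq> Y m"
      using h1 h2 l1(3) by metis
  qed
  have xym: "X m \<noteq> Y m" using disjoint_swapsD[OF d, of m m] by simp
  have A: "\<forall>l<Suc m. swaps X Y (Suc m) \<epsilon> (X l) = (if \<epsilon> l then Y l else X l) \<and> swaps X Y (Suc m) \<epsilon> (Y l) = (if \<epsilon> l then X l else Y l)"
  proof (intro allI impI)
    fix l assume l: "l < Suc m"
    show "swaps X Y (Suc m) \<epsilon> (X l) = (if \<epsilon> l then Y l else X l) \<and> swaps X Y (Suc m) \<epsilon> (Y l) = (if \<epsilon> l then X l else Y l)"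
    proof (cases "l < m")
      case True
      have s1: "swaps X Y m \<epsilon> (X l) = (if \<epsilon> l then Y l else X l)" and s2: "swaps X Y m \<epsilon> (Y l) = (if \<epsilon> l then X l else Y l)"
        using IH True by auto
      have "?T (if \<epsilon> l then Y l else X l) = (if \<epsilon> l then Y l else X l)" using dm True by (intro fixT) auto
      moreover have "?T (if \<epsilon> l then X l else Y l) = (if \<epsilon> l then X l else Y l)" using dm True by (intro fixT) auto
      ultimately show ?thesis using s1 s2 by simp
    next
      case False
      then have lm: "l = m" using l by simp
      have "\<forall>l'<m. X m \<noteq> X l' \<and> X m \<noteq> Y l'" using dm by auto
      then have s1: "swaps X Y m \<epsilon> (X m) = X m" using IH by blast
      have "\<forall>l'<m. Y m \<noteq> X l' \<and> Y m \<noteq> Y l'" using dm by auto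
      then have s2: "swaps X Y m \<epsilon> (Y m) = Y m" using IH by blast
      show ?thesis unfolding lm using s1 s2 xym by simp
    qed
  qed
  have B: "\<forall>z. (\<forall>l<Suc m. z \<noteq> X l \<and> z \<noteq> Y l) \<longrightarrow> swaps X Y (Suc m) \<epsilon> z = z"
  proof (intro allI impI)
    fix z assume z: "\<forall>l<Suc m. z \<noteq> X l \<and> z \<noteq> Y l"
    then have "swaps X Y m \<epsilon> z = z" using IH by auto
    moreover have "?T z = z" using z by (intro fixT) auto
    ultimately show "swaps X Y (Suc m) \<epsilon> z = z" by simp
  qed
  show ?case using A B by blast
qed

lemma swaps_X: "disjoint_swaps X Y m \<Longrightarrow> l < m \<Longrightarrow> swaps X Y m \<epsilon> (X l) = (if \<epsilon> l then Y l else X l)"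
  using swaps_char by blast
lemma swaps_Y: "disjoint_swaps X Y m \<Longrightarrow> l < m \<Longrightarrow> swaps X Y m \<epsilon> (Y l) = (if \<epsilon> l then X l else Y l)"
  using swaps_char by blast
lemma swaps_other: "disjoint_swaps X Y m \<Longrightarrow> (\<And>l. l < m \<Longrightarrow> z \<noteq> X l \<and> z \<noteq> Y l) \<Longrightarrow> swaps X Y m \<epsilon> z = z"
  using swaps_char by blast

lemma swaps_cases:
  obtains (cX) l where "l < m" "z = X l" | (cY) l where "l < m" "z = Y l" | (cO) "\<And>l. l < m \<Longrightarrow> z \<noteq> X l \<and> z \<noteq> Y l"
  by blast

lemma swaps_invol:
  assumes d: "disjoint_swaps X Y m"
  shows "swaps X Y m \<epsilon> (swaps X Y m \<epsilon> z) = z"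
proof (cases rule: swaps_cases[where z=z and m=m and X=X and Y=Y])
  case (cX l) then show ?thesis using swaps_X[OF d] swaps_Y[OF d] by simp
next
  case (cY l) then show ?thesis using swaps_X[OF d] swaps_Y[OF d] by simp
next
  case cO then show ?thesis using swaps_other[OF d] by simp
qed

lemma swaps_in:
  assumes d: "disjoint_swaps X Y m" and XY: "\<And>l. l < m \<Longrightarrow> X l \<in> B \<and> Y l \<in> B" and z: "z \<in> B"
  shows "swaps X Y m \<epsilon> z \<in> B"
proof (cases rule: swaps_cases[where z=z and m=m and X=X and Y=Y])
  case (cX l) then show ?thesis using swaps_X[OF d] XY by simp
next
  case (cY l) then show ?thesis using swaps_Y[OF d] XY by simp
next
  case cO then show ?thesis using swaps_other[OF d] z by simp
qed

lemma swaps_bij: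
  assumes d: "disjoint_swaps X Y m" and XY: "\<And>l. l < m \<Longrightarrow> X l \<in> B \<and> Y l \<in> B"
  shows "bij_betw (swaps X Y m \<epsilon>) B B"
proof (rule bij_betw_byWitness[where f'="swaps X Y m \<epsilon>"])
  show "\<forall>a\<in>B. swaps X Y m \<epsilon> (swaps X Y m \<epsilon> a) = a" using swaps_invol[OF d] by blast
  show "\<forall>a\<in>B. swaps X Y m \<epsilon> (swaps X Y m \<epsilon> a) = a" using swaps_invol[OF d] by blast
  show "swaps X Y m \<epsilon> ` B \<subseteq> B" using swaps_in[OF d XY] by blast
  show "swaps X Y m \<epsilon> ` B \<subseteq> B" using swaps_in[OF d XY] by blast
qed

lemma swaps_junta:
  assumes d: "disjoint_swaps X Y m" and agree: "\<And>l. l < m \<Longrightarrow> z = X l \<or> z = Y l \<Longrightarrow> \<epsilon> l = \<epsilon>' l"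
  shows "swaps X Y m \<epsilon> z = swaps X Y m \<epsilon>' z"
proof (cases rule: swaps_cases[where z=z and m=m and X=X and Y=Y])
  case (cX l) then show ?thesis using swaps_X[OF d] agree by simp
next
  case (cY l) then show ?thesis using swaps_Y[OF d] agree by simp
next
  case cO then show ?thesis using swaps_other[OF d] by simp
qed

lemma swaps_flip:
  assumes d: "disjoint_swaps X Y m" and j: "j < m"
  shows "swaps X Y m (\<epsilon>(j:=True)) z = Transposition.transpose (X j) (Y j) (swaps X Y m (\<epsilon>(j:=False)) z)"
proof -
  have xy: "X j \<noteq> Y j" using disjoint_swapsD[OF d j j] by simp
  show ?thesis
  proof (cases rule: swaps_cases[where z=z and m=m and X=X and Y=Y])
    case (cX l)
    show ?thesis
    proof (cases "l = j")
      case True then show ?thesis using cX swaps_X[OF d] xy by simp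
    next
      case False
      have "X l \<noteq> X j" "X l \<noteq> Y j" "Y l \<noteq> X j" "Y l \<noteq> Y j"
        using disjoint_swapsD[OF d cX(1) j] disjoint_swapsD[OF d j cX(1)] False by auto
      then show ?thesis using cX swaps_X[OF d] False by simp
    qed
  next
    case (cY l)
    show ?thesis
    proof (cases "l = j")
      case True then show ?thesis using cY swaps_Y[OF d] xy by simp
    next
      case False
      have "X l \<noteq> X j" "X l \<noteq> Y j" "Y l \<noteq> X j" "Y l \<noteq> Y j"
        using disjoint_swapsD[OF d cY(1) j] disjoint_swapsD[OF d j cY(1)] False by auto
      then show ?thesis using cY swaps_Y[OF d] False by simp
    qed
  next
    case cO
    have "z \<noteq> X j" "z \<noteq> Y j" using cO j by auto
    then show ?thesis using cO swaps_other[OF d] by simp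
  qed
qed


lemma card_swaps_meeting_le:
  assumes d: "disjoint_swaps X Y m" and "finite E"
  shows "card {l. l < m \<and> (X l \<in> E \<or> Y l \<in> E)} \<le> card E"
proof -
  let ?S = "{l. l < m \<and> (X l \<in> E \<or> Y l \<in> E)}"
  define h where "h l = (if X l \<in> E then X l else Y l)" for l
  have "inj_on h ?S"
  proof (rule inj_onI, rule ccontr)
    fix l l' assume "l \<in> ?S" "l' \<in> ?S" "h l = h l'" "l \<noteq> l'"
    then show False
      using disjoint_swapsD[OF d, of l l'] disjoint_swapsD[OF d, of l' l] unfolding h_def
      by (auto split: if_splits)
  qed
  moreover have "h ` ?S \<subseteq> E" by (auto simp: h_def)
  ultimately show ?thesis by (rule card_inj_on_le) (rule assms(2))
qed

lemma deg_le_bij_inner_swaps: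
  assumes fA: "finite A" and d: "disjoint_swaps X Y m" and k: "k \<ge> 1"
  shows "deg_le k (\<lambda>\<epsilon>. bij_inner k A w u (swaps X Y m \<epsilon> \<circ> \<pi>))"
  unfolding bij_inner_def
proof (rule deg_le_sum[where S="\<lambda>e. {l. l < m \<and> (X l \<in> \<pi> ` e \<or> Y l \<in> \<pi> ` e)}"])
  show "finite (ksets A k)" by (rule finite_ksets[OF fA])
  fix e assume "e \<in> ksets A k"
  then have ce: "card e = k" and fe: "finite e"
    using k by (auto simp: ksets_def intro: card_ge_0_finite)
  let ?S = "{l. l < m \<and> (X l \<in> \<pi> ` e \<or> Y l \<in> \<pi> ` e)}"
  have "junta ?S (\<lambda>\<epsilon>. w e * u ((swaps X Y m \<epsilon> \<circ> \<pi>) ` e))"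
    unfolding junta_def
  proof (intro allI impI)
    fix \<epsilon> \<epsilon>' :: "nat \<Rightarrow> bool" assume agree: "\<forall>i\<in>?S. \<epsilon> i = \<epsilon>' i"
    have "swaps X Y m \<epsilon> (\<pi> z) = swaps X Y m \<epsilon>' (\<pi> z)" if z: "z \<in> e" for z
    proof (rule swaps_junta[OF d])
      fix l assume l: "l < m" and "\<pi> z = X l \<or> \<pi> z = Y l"
      then have "X l \<in> \<pi> ` e \<or> Y l \<in> \<pi> ` e" using z by (metis imageI)
      then show "\<epsilon> l = \<epsilon>' l" using agree l by blast
    qed
    then show "w e * u ((swaps X Y m \<epsilon> \<circ> \<pi>) ` e) = w e * u ((swaps X Y m \<epsilon>' \<circ> \<pi>) ` e)"
      by (simp add: image_comp[symmetric] cong: image_cong)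
  qed
  moreover have "card ?S \<le> k"
    using card_swaps_meeting_le[OF d finite_imageI[OF fe, of \<pi>]] card_image_le[OF fe, of \<pi>] ce by linarith
  ultimately show "junta ?S (\<lambda>\<epsilon>. w e * u ((swaps X Y m \<epsilon> \<circ> \<pi>) ` e)) \<and> finite ?S \<and> card ?S \<le> k"
    by simp
qed

lemma bij_inner_comp_restrict: "bij_inner k A w u (\<rho> \<circ> \<pi>) = bij_inner k A w u (restrict (\<rho> \<circ> \<pi>) A)"
  by (rule bij_inner_cong) simp

lemma sum_bijs_cube_mean_swaps:
  assumes d: "disjoint_swaps X Y m" and XY: "\<And>l. l < m \<Longrightarrow> X l \<in> B \<and> Y l \<in> B"
    and fA: "finite A" and fB: "finite B"
  shows "(\<Sum>\<pi>\<in>bijs A B. cube_mean m (\<lambda>\<epsilon>. \<bar>bij_inner k A w u (swaps X Y m \<epsilon> \<circ> \<pi>)\<bar>))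
           = (\<Sum>\<pi>\<in>bijs A B. \<bar>bij_inner k A w u \<pi>\<bar>)"
proof -
  have "(\<Sum>\<pi>\<in>bijs A B. \<bar>bij_inner k A w u (swaps X Y m \<epsilon> \<circ> \<pi>)\<bar>) = (\<Sum>\<pi>\<in>bijs A B. \<bar>bij_inner k A w u \<pi>\<bar>)"
    for \<epsilon>
    unfolding bij_inner_comp_restrict by (rule sum_bijs_comp_left[OF swaps_bij[OF d XY]])
  then show ?thesis
    by (simp add: cube_mean_sum[OF finite_bijs[OF fA fB], symmetric] cube_mean_const)
qed

lemma sum_bijs_cube_mean_deriv_swaps:
  assumes d: "disjoint_swaps X Y m" and XY: "\<And>l. l < m \<Longrightarrow> X l \<in> B \<and> Y l \<in> B"
    and fA: "finite A" and fB: "finite B" and j: "j < m"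
  shows "(\<Sum>\<pi>\<in>bijs A B. cube_mean m (\<lambda>\<epsilon>. \<bar>cube_deriv j (\<lambda>\<epsilon>. bij_inner k A w u (swaps X Y m \<epsilon> \<circ> \<pi>)) \<epsilon>\<bar>))
           = (\<Sum>\<pi>\<in>bijs A B. \<bar>bij_inner k A w u \<pi> - bij_inner k A w u (Transposition.transpose (X j) (Y j) \<circ> \<pi>)\<bar>) / 2"
proof -
  let ?F = "bij_inner k A w u" and ?T = "Transposition.transpose (X j) (Y j)"
  have "(\<Sum>\<pi>\<in>bijs A B. \<bar>cube_deriv j (\<lambda>\<epsilon>. ?F (swaps X Y m \<epsilon> \<circ> \<pi>)) \<epsilon>\<bar>)
      = (\<Sum>\<pi>\<in>bijs A B. \<bar>?F \<pi> - ?F (?T \<circ> \<pi>)\<bar>) / 2" for \<epsilon>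
  proof -
    let ?\<rho> = "swaps X Y m (\<epsilon>(j:=False))"
    have "?F (swaps X Y m (\<epsilon>(j:=True)) \<circ> \<pi>) = ?F (?T \<circ> restrict (?\<rho> \<circ> \<pi>) A)" for \<pi>
      by (rule bij_inner_cong) (simp add: swaps_flip[OF d j])
    then have "(\<Sum>\<pi>\<in>bijs A B. \<bar>cube_deriv j (\<lambda>\<epsilon>. ?F (swaps X Y m \<epsilon> \<circ> \<pi>)) \<epsilon>\<bar>)
        = (\<Sum>\<pi>\<in>bijs A B. \<bar>?F (restrict (?\<rho> \<circ> \<pi>) A) - ?F (?T \<circ> restrict (?\<rho> \<circ> \<pi>) A)\<bar> / 2)"
      unfolding cube_deriv_def bij_inner_comp_restrict[of k A w u ?\<rho>] by (simp add: abs_minus_commute)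
    also have "\<dots> = (\<Sum>\<pi>\<in>bijs A B. \<bar>?F \<pi> - ?F (?T \<circ> \<pi>)\<bar> / 2)"
      by (rule sum_bijs_comp_left[OF swaps_bij[OF d XY], where G="\<lambda>\<pi>. \<bar>?F \<pi> - ?F (?T \<circ> \<pi>)\<bar> / 2"])
    finally show ?thesis by (simp add: sum_divide_distrib)
  qed
  then show ?thesis
    unfolding cube_mean_sum[OF finite_bijs[OF fA fB], symmetric] by (simp only: cube_mean_const)
qed

text \<open>The function \<open>\<epsilon> \<mapsto> F(swaps X Y m \<epsilon> \<circ> \<pi>)\<close> on the cube has degree at most \<open>k\<close>, so the
  influence bound applies to it; averaging over \<open>\<pi>\<close> turns its derivatives into the effect of
  the individual transpositions.\<close>

lemma sum_disjoint_transpose_diffs_le: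
  assumes fA: "finite A" and fB: "finite B" and d: "disjoint_swaps X Y m"
      and XY: "\<And>l. l < m \<Longrightarrow> X l \<in> B \<and> Y l \<in> B" and k: "k \<ge> 1"
  shows "(\<Sum>l<m. \<Sum>\<pi>\<in>bijs A B. \<bar>bij_inner k A w u \<pi> - bij_inner k A w u (Transposition.transpose (X l) (Y l) \<circ> \<pi>)\<bar>)
         \<le> 2 * 3 ^ k * sqrt (real k * real m) * (\<Sum>\<pi>\<in>bijs A B. \<bar>bij_inner k A w u \<pi>\<bar>)"
proof -
  let ?F = "bij_inner k A w u"
  define f where "f \<pi> \<epsilon> = ?F (swaps X Y m \<epsilon> \<circ> \<pi>)" for \<pi> \<epsilon>
  define C where "C = 3 ^ k * sqrt (real k * real m)"
  have "(\<Sum>l<m. \<Sum>\<pi>\<in>bijs A B. \<bar>?F \<pi> - ?F (Transposition.transpose (X l) (Y l) \<circ> \<pi>)\<bar>)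
      = (\<Sum>l<m. 2 * (\<Sum>\<pi>\<in>bijs A B. cube_mean m (\<lambda>\<epsilon>. \<bar>cube_deriv l (f \<pi>) \<epsilon>\<bar>)))"
    unfolding f_def by (intro sum.cong refl) (simp add: sum_bijs_cube_mean_deriv_swaps[OF d XY fA fB])
  also have "\<dots> = 2 * (\<Sum>\<pi>\<in>bijs A B. \<Sum>l<m. cube_mean m (\<lambda>\<epsilon>. \<bar>cube_deriv l (f \<pi>) \<epsilon>\<bar>))"
    by (subst sum.swap) (rule sum_distrib_left[symmetric])
  also have "\<dots> \<le> 2 * (\<Sum>\<pi>\<in>bijs A B. C * cube_mean m (\<lambda>\<epsilon>. \<bar>f \<pi> \<epsilon>\<bar>))"
    unfolding C_def f_def by (intro mult_left_mono sum_mono sum_abs_cube_deriv_le deg_le_bij_inner_swaps[OF fA d k]) simp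
  also have "\<dots> = 2 * C * (\<Sum>\<pi>\<in>bijs A B. \<bar>?F \<pi>\<bar>)"
    unfolding f_def by (simp add: sum_distrib_left[symmetric] sum_bijs_cube_mean_swaps[OF d XY fA fB])
  finally show ?thesis unfolding C_def by simp
qed

lemma disjoint_swaps_even_odd:
  assumes inj: "inj_on \<gamma> {..<2*m}"
  shows "disjoint_swaps (\<lambda>l. \<gamma> (2*l)) (\<lambda>l. \<gamma> (2*l+1)) m"
  unfolding disjoint_swaps_def
proof (intro allI impI)
  fix l l' assume "l < m" "l' < m"
  then have dom: "2*l \<in> {..<2*m}" "2*l+1 \<in> {..<2*m}" "2*l' \<in> {..<2*m}" "2*l'+1 \<in> {..<2*m}" by auto
  have "\<gamma> (2*l) \<noteq> \<gamma> (2*l'+1)"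
  proof
    assume "\<gamma> (2*l) = \<gamma> (2*l'+1)"
    then have "2*l = 2*l'+1" by (rule inj_onD[OF inj _ dom(1) dom(4)])
    then show False by presburger
  qed
  moreover have "\<gamma> (2*l) = \<gamma> (2*l') \<longrightarrow> l = l'" using inj_onD[OF inj _ dom(1) dom(3)] by simp
  moreover have "\<gamma> (2*l+1) = \<gamma> (2*l'+1) \<longrightarrow> l = l'" using inj_onD[OF inj _ dom(2) dom(4)] by simp
  ultimately show "\<gamma> (2*l) \<noteq> \<gamma> (2*l'+1) \<and> (\<gamma> (2*l) = \<gamma> (2*l') \<longrightarrow> l = l')
      \<and> (\<gamma> (2*l+1) = \<gamma> (2*l'+1) \<longrightarrow> l = l')" by blast
qed

lemma fact_minus2: "n \<ge> 2 \<Longrightarrow> (fact n :: real) = real n * (real n - 1) * fact (n - 2)"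
proof -
  assume "n \<ge> 2"
  then obtain r where n: "n = Suc (Suc r)" by (metis add_2_eq_Suc le_Suc_ex)
  show ?thesis unfolding n by (simp add: algebra_simps)
qed

text \<open>Averaging the previous bound over all ways of packing \<open>n div 2\<close> disjoint transpositions
  into \<open>B\<close>: every transposition of \<open>B\<close> appears equally often.\<close>

lemma sum_transpose_diffs_le:
  assumes fA: "finite A" and fB: "finite B" and cB: "card B = n" and n2: "n \<ge> 2"
      and k: "k \<ge> 1"
  shows "(\<Sum>p\<in>distinct_pairs B. \<Sum>\<pi>\<in>bijs A B.
            \<bar>bij_inner k A w u \<pi> - bij_inner k A w u (Transposition.transpose (fst p) (snd p) \<circ> \<pi>)\<bar>)
         \<le> real n * (real n - 1) * (2 * 3 ^ k * sqrt (real k * real (n div 2))) / real (n div 2)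
             * (\<Sum>\<pi>\<in>bijs A B. \<bar>bij_inner k A w u \<pi>\<bar>)"
proof -
  let ?F = "bij_inner k A w u"
  define m where "m = n div 2"
  define H where "H x y = (\<Sum>\<pi>\<in>bijs A B. \<bar>?F \<pi> - ?F (Transposition.transpose x y \<circ> \<pi>)\<bar>)" for x y
  define S where "S = (\<Sum>\<pi>\<in>bijs A B. \<bar>?F \<pi>\<bar>)"
  define K where "K = 2 * 3 ^ k * sqrt (real k * real m)"
  have m1: "m \<ge> 1" and m2: "2 * m \<le> n" using n2 unfolding m_def by auto
  obtain \<beta> where \<beta>: "bij_betw \<beta> {..<n} B"
    using ex_bij_betw_nat_finite[OF fB] cB by (auto simp: atLeast0LessThan)
  have \<beta>B: "\<beta> i \<in> B" if "i < n" for i using \<beta> that by (auto simp: bij_betw_def)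
  have bound: "(\<Sum>l<m. H (\<rho> (\<beta> (2*l))) (\<rho> (\<beta> (2*l+1)))) \<le> K * S" if "\<rho> \<in> bijs B B" for \<rho>
  proof -
    have \<rho>: "bij_betw \<rho> B B" using that by (simp add: bijs_def)
    have "inj_on (\<rho> \<circ> \<beta>) {..<2*m}"
      using bij_betw_trans[OF \<beta> \<rho>] m2 by (auto simp: bij_betw_def intro: inj_on_subset)
    then have "disjoint_swaps (\<lambda>l. \<rho> (\<beta> (2*l))) (\<lambda>l. \<rho> (\<beta> (2*l+1))) m"
      using disjoint_swaps_even_odd by (simp add: comp_def)
    moreover have "\<rho> (\<beta> (2*l)) \<in> B \<and> \<rho> (\<beta> (2*l+1)) \<in> B" if "l < m" for l
      using \<rho> \<beta>B that m2 by (auto simp: bij_betw_def)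
    ultimately show ?thesis
      using sum_disjoint_transpose_diffs_le[OF fA fB _ _ k] unfolding H_def K_def S_def by simp
  qed
  have pair: "(\<beta> (2*l), \<beta> (2*l+1)) \<in> distinct_pairs B" if "l < m" for l
  proof -
    have l: "2*l < n" "2*l+1 < n" using that m2 by auto
    then have "\<beta> (2*l) \<noteq> \<beta> (2*l+1)"
      using inj_onD[OF bij_betw_imp_inj_on[OF \<beta>], of "2*l" "2*l+1"] by auto
    then show ?thesis using \<beta>B[OF l(1)] \<beta>B[OF l(2)] by (simp add: distinct_pairs_def)
  qed
  have "real m * fact (n - 2) * (\<Sum>p\<in>distinct_pairs B. H (fst p) (snd p))
      = (\<Sum>l<m. fact (n - 2) * (\<Sum>p\<in>distinct_pairs B. H (fst p) (snd p)))"
    by simp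
  also have "\<dots> = (\<Sum>l<m. \<Sum>\<rho>\<in>bijs B B. H (\<rho> (\<beta> (2*l))) (\<rho> (\<beta> (2*l+1))))"
  proof (rule sum.cong[OF refl])
    fix l assume "l \<in> {..<m}"
    then show "fact (n - 2) * (\<Sum>p\<in>distinct_pairs B. H (fst p) (snd p))
        = (\<Sum>\<rho>\<in>bijs B B. H (\<rho> (\<beta> (2*l))) (\<rho> (\<beta> (2*l+1))))"
      using sum_bijs_pair_image[OF fB pair, of l H] cB by simp
  qed
  also have "\<dots> = (\<Sum>\<rho>\<in>bijs B B. \<Sum>l<m. H (\<rho> (\<beta> (2*l))) (\<rho> (\<beta> (2*l+1))))"
    by (rule sum.swap)
  also have "\<dots> \<le> fact n * (K * S)"
    using sum_mono[of "bijs B B", OF bound] card_bijs[OF fB fB refl] cB by simp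
  also have "\<dots> = real m * fact (n - 2) * (real n * (real n - 1) * K / real m * S)"
    using fact_minus2[OF n2] m1 by simp
  finally have "(\<Sum>p\<in>distinct_pairs B. H (fst p) (snd p)) \<le> real n * (real n - 1) * K / real m * S"
    by (rule mult_left_le_imp_le) (use m1 in simp)
  then show ?thesis unfolding H_def K_def S_def m_def .
qed

lemma sum_transpose_diff_eq:
  assumes fA: "finite A" and fB: "finite B" and x: "x \<in> B" and y: "y \<in> B" and xy: "x \<noteq> y" and k: "k \<ge> 1"
  shows "(\<Sum>\<pi>\<in>bijs A B. \<bar>bij_inner k A w u \<pi> - bij_inner k A w u (Transposition.transpose x y \<circ> \<pi>)\<bar>) =
         (\<Sum>p\<in>distinct_pairs A. \<Sum>\<sigma>\<in>bijs (A - {fst p, snd p}) (B - {x,y}).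
            \<bar>bij_inner (k - 1) (A - {fst p, snd p}) (diff_weight w (fst p) (snd p)) (diff_weight u x y) \<sigma>\<bar>)"
  unfolding sum_bijs_by_preimages[OF fA fB x y xy]
proof (intro sum.cong refl)
  fix p \<sigma> assume p: "p \<in> distinct_pairs A" and s: "\<sigma> \<in> bijs (A - {fst p, snd p}) (B - {x,y})"
  obtain a b where pab: "p = (a,b)" by (metis prod.collapse)
  have ab: "a \<in> A" "b \<in> A" "a \<noteq> b" using p pab by (auto simp: distinct_pairs_def)
  let ?\<pi> = "restrict (\<sigma>(a:=x, b:=y)) A"
  have "?\<pi> \<in> {\<pi> \<in> bijs A B. \<pi> a = x \<and> \<pi> b = y}"
    using bij_betwE[OF bijs_fibre_bij[OF ab x y xy]] s pab by simp
  then have bij: "bij_betw ?\<pi> A B" and "?\<pi> a = x" "?\<pi> b = y" by (simp_all add: bijs_def)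
  then have "bij_inner k A w u ?\<pi> - bij_inner k A w u (Transposition.transpose x y \<circ> ?\<pi>) =
        bij_inner (k - 1) (A - {a,b}) (diff_weight w a b) (diff_weight u x y) ?\<pi>"
    by (intro bij_inner_transpose_diff[OF fA bij ab _ _ k])
  also have "\<dots> = bij_inner (k - 1) (A - {a,b}) (diff_weight w a b) (diff_weight u x y) \<sigma>"
    by (rule bij_inner_cong) simp
  finally show "\<bar>bij_inner k A w u (restrict (\<sigma>(fst p := x, snd p := y)) A)
        - bij_inner k A w u (Transposition.transpose x y \<circ> restrict (\<sigma>(fst p := x, snd p := y)) A)\<bar> =
      \<bar>bij_inner (k - 1) (A - {fst p, snd p}) (diff_weight w (fst p) (snd p))
                (diff_weight u x y) \<sigma>\<bar>"
    unfolding pab by simp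
qed

definition W_sum :: "nat \<Rightarrow> 'a set \<Rightarrow> 'b set \<Rightarrow> ('a set \<Rightarrow> real) \<Rightarrow> ('b set \<Rightarrow> real) \<Rightarrow> real" where
  "W_sum k A B w u = (\<Sum>i=0..k. real (card A) powr (- real i / 2) * Wvec k A w i * Wvec k B u i)"

lemma Wvec_nonneg: "Wvec k V w i \<ge> 0"
proof (induction i arbitrary: k V w)
  case (Suc i)
  have "0 \<le> real (card V) * (real (card V) - 1)" by (cases "card V") auto
  then show ?case by (simp add: Suc.IH sum_nonneg)
qed simp

lemma sum_distinct_pairs_Wvec:
  assumes "card V = n" and "n \<ge> 2"
  shows "(\<Sum>p\<in>distinct_pairs V. Wvec (k - 1) (V - {fst p, snd p}) (diff_weight w (fst p) (snd p)) i)
           = real n * (real n - 1) * Wvec k V w (Suc i)"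
  using assms by (simp add: distinct_pairs_def)

lemma sum_sum_product:
  fixes c :: "'c::comm_semiring_1"
  shows "(\<Sum>q\<in>Q. \<Sum>p\<in>P. c * a p * b q) = c * sum a P * sum b Q"
proof -
  have "c * sum a P * sum b Q = (\<Sum>q\<in>Q. c * sum a P * b q)" by (rule sum_distrib_left)
  also have "\<dots> = (\<Sum>q\<in>Q. \<Sum>p\<in>P. c * a p * b q)"
    by (rule sum.cong[OF refl]) (simp add: sum_distrib_left sum_distrib_right)
  finally show ?thesis by simp
qed

lemma sum_W_sum_diff_weights:
  assumes fA: "finite A" and cA: "card A = n" and cB: "card B = n" and n2: "n \<ge> 2"
  shows "(\<Sum>q\<in>distinct_pairs B. \<Sum>p\<in>distinct_pairs A.
            W_sum k (A - {fst p, snd p}) (B - {fst q, snd q}) (diff_weight w (fst p) (snd p)) (diff_weight u (fst q) (snd q)))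
         = (real n * (real n - 1))\<^sup>2 * (\<Sum>j=0..k. (real n - 2) powr (- real j / 2)
              * Wvec (Suc k) A w (Suc j) * Wvec (Suc k) B u (Suc j))"
proof -
  let ?Wa = "\<lambda>j p. Wvec k (A - {fst p, snd p}) (diff_weight w (fst p) (snd p)) j"
  let ?Ub = "\<lambda>j q. Wvec k (B - {fst q, snd q}) (diff_weight u (fst q) (snd q)) j"
  let ?c = "\<lambda>j. (real n - 2) powr (- real j / 2)"
  have "(\<Sum>q\<in>distinct_pairs B. \<Sum>p\<in>distinct_pairs A.
            W_sum k (A - {fst p, snd p}) (B - {fst q, snd q}) (diff_weight w (fst p) (snd p)) (diff_weight u (fst q) (snd q)))
      = (\<Sum>q\<in>distinct_pairs B. \<Sum>p\<in>distinct_pairs A. \<Sum>j=0..k. ?c j * ?Wa j p * ?Ub j q)"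
  proof (intro sum.cong refl)
    fix p q assume "p \<in> distinct_pairs A"
    then have "real (card (A - {fst p, snd p})) = real n - 2"
      using card_Diff_pair[OF fA, of "fst p" "snd p"] cA n2 by (simp add: of_nat_diff)
    then show "W_sum k (A - {fst p, snd p}) (B - {fst q, snd q}) (diff_weight w (fst p) (snd p)) (diff_weight u (fst q) (snd q))
        = (\<Sum>j=0..k. ?c j * ?Wa j p * ?Ub j q)"
      unfolding W_sum_def by simp
  qed
  also have "\<dots> = (\<Sum>j=0..k. \<Sum>q\<in>distinct_pairs B. \<Sum>p\<in>distinct_pairs A. ?c j * ?Wa j p * ?Ub j q)"
    by (simp only: sum.swap[where A = "{0..k}"])
  also have "\<dots> = (\<Sum>j=0..k. ?c j * (\<Sum>p\<in>distinct_pairs A. ?Wa j p) * (\<Sum>q\<in>distinct_pairs B. ?Ub j q))"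
    by (simp only: sum_sum_product)
  also have "\<dots> = (real n * (real n - 1))\<^sup>2 * (\<Sum>j=0..k. ?c j * Wvec (Suc k) A w (Suc j) * Wvec (Suc k) B u (Suc j))"
    using sum_distinct_pairs_Wvec[OF cA n2, of "Suc k" w] sum_distinct_pairs_Wvec[OF cB n2, of "Suc k" u]
    by (simp add: sum_distrib_left power2_eq_square mult_ac)
  finally show ?thesis .
qed

text \<open>The induction hypothesis, applied to every pair of difference weightings, bounds the total
  effect of all transpositions of \<open>B\<close> from below.\<close>

lemma sum_transpose_diffs_ge:
  fixes c' :: real and A :: "'a set" and B :: "'b set"
  assumes IH: "\<And>(A'::'a set) (B'::'b set) w' u'. finite A' \<Longrightarrow> finite B' \<Longrightarrow> card A' = card B' \<Longrightarrow> 2 * k < card A' \<Longrightarrow>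
           c' * fact (card A') * real (card A') ^ k * W_sum k A' B' w' u' \<le> (\<Sum>\<pi>\<in>bijs A' B'. \<bar>bij_inner k A' w' u' \<pi>\<bar>)"
    and fA: "finite A" and fB: "finite B" and cA: "card A = n" and cB: "card B = n" and big: "2 * Suc k < n"
  shows "c' * fact (n - 2) * (real n - 2) ^ k * (real n * (real n - 1))\<^sup>2
           * (\<Sum>j=0..k. (real n - 2) powr (- real j / 2) * Wvec (Suc k) A w (Suc j) * Wvec (Suc k) B u (Suc j))
         \<le> (\<Sum>q\<in>distinct_pairs B. \<Sum>\<pi>\<in>bijs A B.
              \<bar>bij_inner (Suc k) A w u \<pi> - bij_inner (Suc k) A w u (Transposition.transpose (fst q) (snd q) \<circ> \<pi>)\<bar>)"
proof -
  have n2: "n \<ge> 2" using big by simp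
  have "c' * fact (n - 2) * (real n - 2) ^ k
          * W_sum k (A - {fst p, snd p}) (B - {fst q, snd q}) (diff_weight w (fst p) (snd p)) (diff_weight u (fst q) (snd q))
        \<le> (\<Sum>\<sigma>\<in>bijs (A - {fst p, snd p}) (B - {fst q, snd q}).
             \<bar>bij_inner k (A - {fst p, snd p}) (diff_weight w (fst p) (snd p)) (diff_weight u (fst q) (snd q)) \<sigma>\<bar>)"
    if p: "p \<in> distinct_pairs A" and q: "q \<in> distinct_pairs B" for p q
  proof -
    have "card (A - {fst p, snd p}) = n - 2" and "card (B - {fst q, snd q}) = n - 2"
      using card_Diff_pair[OF fA, of "fst p" "snd p"] card_Diff_pair[OF fB, of "fst q" "snd q"] p q cA cB
      by simp_all
    then show ?thesis using IH[of "A - {fst p, snd p}" "B - {fst q, snd q}"] fA fB big n2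
      by (simp add: of_nat_diff)
  qed
  then have "c' * fact (n - 2) * (real n - 2) ^ k
      * (\<Sum>q\<in>distinct_pairs B. \<Sum>p\<in>distinct_pairs A.
          W_sum k (A - {fst p, snd p}) (B - {fst q, snd q}) (diff_weight w (fst p) (snd p)) (diff_weight u (fst q) (snd q)))
      \<le> (\<Sum>q\<in>distinct_pairs B. \<Sum>p\<in>distinct_pairs A. \<Sum>\<sigma>\<in>bijs (A - {fst p, snd p}) (B - {fst q, snd q}).
             \<bar>bij_inner k (A - {fst p, snd p}) (diff_weight w (fst p) (snd p)) (diff_weight u (fst q) (snd q)) \<sigma>\<bar>)"
    by (simp add: sum_distrib_left sum_mono)
  also have "\<dots> = (\<Sum>q\<in>distinct_pairs B. \<Sum>\<pi>\<in>bijs A B.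
              \<bar>bij_inner (Suc k) A w u \<pi> - bij_inner (Suc k) A w u (Transposition.transpose (fst q) (snd q) \<circ> \<pi>)\<bar>)"
  proof (rule sum.cong[OF refl])
    fix q assume "q \<in> distinct_pairs B"
    then show "(\<Sum>p\<in>distinct_pairs A. \<Sum>\<sigma>\<in>bijs (A - {fst p, snd p}) (B - {fst q, snd q}).
             \<bar>bij_inner k (A - {fst p, snd p}) (diff_weight w (fst p) (snd p)) (diff_weight u (fst q) (snd q)) \<sigma>\<bar>)
        = (\<Sum>\<pi>\<in>bijs A B.
              \<bar>bij_inner (Suc k) A w u \<pi> - bij_inner (Suc k) A w u (Transposition.transpose (fst q) (snd q) \<circ> \<pi>)\<bar>)"
      using sum_transpose_diff_eq[OF fA fB, of "fst q" "snd q" "Suc k" w u] by (auto simp: distinct_pairs_def)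
  qed
  finally show ?thesis
    unfolding sum_W_sum_diff_weights[OF fA cA cB n2] by (simp add: mult_ac)
qed

lemma sqrt_le_div_sqrt:
  assumes "n \<le> 3 * m" and "0 < m"
  shows "sqrt (real n) / (2 * 3 ^ j * sqrt (3 * real j)) \<le> real m / (2 * 3 ^ j * sqrt (real j * real m))"
proof (cases "j = 0")
  case False
  have "sqrt (real n) \<le> sqrt (real m) * sqrt 3"
    using real_sqrt_le_mono[of "real n" "3 * real m"] assms(1) by (simp add: real_sqrt_mult mult.commute)
  then have "sqrt (real m) * sqrt (real n) \<le> sqrt (real m) * (sqrt (real m) * sqrt 3)"
    by (rule mult_left_mono) simp
  then have "sqrt (real m) * sqrt (real n) \<le> real m * sqrt 3"
    by (simp add: mult.assoc[symmetric])
  then show ?thesis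
    using False assms(2) by (simp add: real_sqrt_mult divide_right_mono field_simps)
qed simp

lemma higher_terms_constant_bound:
  fixes n m k :: nat and c' S T' T'' :: real
  assumes n3: "n \<ge> 3" and nm: "n \<le> 3 * m" and c': "c' > 0" and T'': "0 \<le> T''" "T'' \<le> T'"
    and main: "c' * fact n * (real n - 2) ^ k * T' * (real m / (2 * 3 ^ Suc k * sqrt (real (Suc k) * real m))) \<le> S"
  shows "c' / (2 * 3 ^ Suc k * sqrt (3 * real (Suc k)) * 3 ^ k) * fact n * real n ^ Suc k * (T'' / sqrt (real n)) \<le> S"
proof -
  define D where "D = 2 * 3 ^ Suc k * sqrt (3 * real (Suc k))"
  have D: "D > 0" unfolding D_def by simp
  have "real n ^ Suc k = real n ^ k * sqrt (real n) * sqrt (real n)" by simp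
  then have "c' / (D * 3 ^ k) * fact n * real n ^ Suc k * (T'' / sqrt (real n))
      = c' * fact n * (real n / 3) ^ k * T'' * (sqrt (real n) / D)"
    using D n3 by (simp add: field_simps power_divide)
  also have "\<dots> \<le> c' * fact n * (real n - 2) ^ k * T' * (real m / (2 * 3 ^ Suc k * sqrt (real (Suc k) * real m)))"
  proof (intro mult_mono)
    show "(real n / 3) ^ k \<le> (real n - 2) ^ k" using n3 by (intro power_mono) simp_all
    show "sqrt (real n) / D \<le> real m / (2 * 3 ^ Suc k * sqrt (real (Suc k) * real m))"
      unfolding D_def by (rule sqrt_le_div_sqrt[OF nm]) (use nm n3 in simp)
  qed (use c' T'' n3 D in simp_all)
  finally show ?thesis using main unfolding D_def by simp
qed

lemma powr_neg_half_Suc: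
  assumes "x > 0"
  shows "x powr (- real (Suc j) / 2) = x powr (- real j / 2) / sqrt x"
proof -
  have "- real (Suc j) / 2 = - real j / 2 - 1/2" by simp
  then have "x powr (- real (Suc j) / 2) = x powr (- real j / 2 - 1/2)" by (simp only:)
  also have "\<dots> = x powr (- real j / 2) / sqrt x"
    using assms by (simp add: powr_diff powr_half_sqrt)
  finally show ?thesis .
qed

text \<open>The inductive step: by \<open>sum_transpose_diffs_le\<close> and \<open>sum_transpose_diffs_ge\<close>, the terms
  \<open>i \<ge> 1\<close> of the bound for degree \<open>k + 1\<close> follow from the bound for degree \<open>k\<close>.\<close>

lemma sum_abs_bij_inner_ge_higher_terms:
  fixes c' :: real and A :: "'a set" and B :: "'b set"
  assumes c': "c' > 0"
    and IH: "\<And>(A'::'a set) (B'::'b set) w' u'. finite A' \<Longrightarrow> finite B' \<Longrightarrow> card A' = card B' \<Longrightarrow> 2 * k < card A' \<Longrightarrow>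
           c' * fact (card A') * real (card A') ^ k * W_sum k A' B' w' u' \<le> (\<Sum>\<pi>\<in>bijs A' B'. \<bar>bij_inner k A' w' u' \<pi>\<bar>)"
    and fA: "finite A" and fB: "finite B" and cA: "card A = n" and cB: "card B = n" and big: "2 * Suc k < n"
  shows "c' / (2 * 3 ^ Suc k * sqrt (3 * real (Suc k)) * 3 ^ k) * fact n * real n ^ Suc k
           * (\<Sum>j=0..k. real n powr (- real (Suc j) / 2) * Wvec (Suc k) A w (Suc j) * Wvec (Suc k) B u (Suc j))
         \<le> (\<Sum>\<pi>\<in>bijs A B. \<bar>bij_inner (Suc k) A w u \<pi>\<bar>)"
proof -
  define m where "m = n div 2"
  define N where "N = real n * (real n - 1)"
  define K where "K = 2 * 3 ^ Suc k * sqrt (real (Suc k) * real m)"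
  define S where "S = (\<Sum>\<pi>\<in>bijs A B. \<bar>bij_inner (Suc k) A w u \<pi>\<bar>)"
  define H where "H = (\<Sum>q\<in>distinct_pairs B. \<Sum>\<pi>\<in>bijs A B.
    \<bar>bij_inner (Suc k) A w u \<pi> - bij_inner (Suc k) A w u (Transposition.transpose (fst q) (snd q) \<circ> \<pi>)\<bar>)"
  define T' where "T' = (\<Sum>j=0..k. (real n - 2) powr (- real j / 2) * Wvec (Suc k) A w (Suc j) * Wvec (Suc k) B u (Suc j))"
  define T'' where "T'' = (\<Sum>j=0..k. real n powr (- real j / 2) * Wvec (Suc k) A w (Suc j) * Wvec (Suc k) B u (Suc j))"
  have n3: "n \<ge> 3" and n2: "n \<ge> 2" and m1: "m \<ge> 1" and nm: "n \<le> 3 * m"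
    using big unfolding m_def by auto
  have N: "N > 0" and K: "K > 0" unfolding N_def K_def using n3 m1 by auto
  have "c' * fact (n - 2) * (real n - 2) ^ k * N\<^sup>2 * T' \<le> H"
    using sum_transpose_diffs_ge[OF IH fA fB cA cB big, of w u] unfolding N_def T'_def H_def .
  also have "H \<le> N * K / real m * S"
    using sum_transpose_diffs_le[of A B n "Suc k" w u, OF fA fB cB n2] unfolding N_def K_def S_def H_def m_def by simp
  finally have bound: "c' * fact (n - 2) * (real n - 2) ^ k * N\<^sup>2 * T' \<le> N * K / real m * S" .
  have "c' * fact n * (real n - 2) ^ k * T' * (real m / K)
      = (c' * fact (n - 2) * (real n - 2) ^ k * N\<^sup>2 * T') * (real m / (N * K))"
    using fact_minus2[OF n2] N K unfolding N_def[symmetric] by (simp add: field_simps power2_eq_square)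
  also have "\<dots> \<le> (N * K / real m * S) * (real m / (N * K))"
    by (rule mult_right_mono[OF bound]) (use N K in simp)
  also have "\<dots> = S" using N K m1 by (simp add: field_simps)
  finally have main: "c' * fact n * (real n - 2) ^ k * T' * (real m / K) \<le> S" .
  have "T'' \<le> T'"
    unfolding T'_def T''_def using n3
    by (intro sum_mono mult_right_mono powr_mono2' mult_nonneg_nonneg Wvec_nonneg) simp_all
  moreover have "0 \<le> T''" unfolding T''_def by (intro sum_nonneg mult_nonneg_nonneg Wvec_nonneg) simp
  moreover have "(\<Sum>j=0..k. real n powr (- real (Suc j) / 2) * Wvec (Suc k) A w (Suc j) * Wvec (Suc k) B u (Suc j))
      = T'' / sqrt (real n)"
    unfolding T''_def sum_divide_distrib
    by (rule sum.cong[OF refl]) (use n3 in \<open>simp only: powr_neg_half_Suc times_divide_eq_left of_nat_0_less_iff\<close>)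
  ultimately show ?thesis
    using higher_terms_constant_bound[OF n3 nm c' _ _ main[unfolded K_def]] unfolding S_def by simp
qed

lemma sum_abs_bij_inner_ge_W0:
  assumes fA: "finite A" and fB: "finite B" and cA: "card A = n" and cB: "card B = n" and kn: "k \<le> n"
  shows "fact n * (real n / real k) ^ k * (Wvec k A w 0 * Wvec k B u 0)
           \<le> (\<Sum>\<pi>\<in>bijs A B. \<bar>bij_inner k A w u \<pi>\<bar>)"
proof -
  define C where "C = real (n choose k)"
  have C: "C > 0" unfolding C_def using kn by simp
  have "fact n * (real n / real k) ^ k * (Wvec k A w 0 * Wvec k B u 0)
      \<le> fact n * C * (Wvec k A w 0 * Wvec k B u 0)"
    unfolding C_def using binomial_ge_n_over_k_pow_k[OF kn]
    by (intro mult_right_mono mult_left_mono) (simp_all add: Wvec_nonneg)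
  also have "\<dots> = \<bar>\<Sum>\<pi>\<in>bijs A B. bij_inner k A w u \<pi>\<bar>"
    unfolding sum_bij_inner[OF fA fB cA cB kn] C_def[symmetric] using C cA cB
    by (simp add: abs_mult C_def field_simps)
  also have "\<dots> \<le> (\<Sum>\<pi>\<in>bijs A B. \<bar>bij_inner k A w u \<pi>\<bar>)" by (rule sum_abs)
  finally show ?thesis .
qed

lemma bij_inner_lower_bound_0:
  assumes "finite A" and "finite B" and "card A = card B" and "0 < card A"
  shows "fact (card A) * W_sum 0 A B w u \<le> (\<Sum>\<pi>\<in>bijs A B. \<bar>bij_inner 0 A w u \<pi>\<bar>)"
proof -
  have "bij_inner 0 A w u \<pi> = w {} * u {}" for \<pi>
    unfolding bij_inner_def ksets_0[OF assms(1)] by simp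
  moreover have "W_sum 0 A B w u = \<bar>w {}\<bar> * \<bar>u {}\<bar>"
  proof -
    have "real (card A) \<noteq> 0" and "card B choose 0 = 1" using assms(4) by simp_all
    then show ?thesis using assms(1-3) by (simp add: W_sum_def ksets_0)
  qed
  ultimately show ?thesis
    using card_bijs[OF assms(1-3)] by (simp add: abs_mult)
qed

text \<open>The term \<open>i = 0\<close> of the bound comes from the first moment, the terms \<open>i \<ge> 1\<close> from
  \<open>sum_abs_bij_inner_ge_higher_terms\<close>; each gets half of the sum.\<close>

lemma bij_inner_lower_bound_step:
  fixes c' c :: real and A :: "'a set" and B :: "'b set"
  assumes c': "c' > 0"
    and IH: "\<And>(A'::'a set) (B'::'b set) w' u'. finite A' \<Longrightarrow> finite B' \<Longrightarrow> card A' = card B' \<Longrightarrow> 2 * k < card A' \<Longrightarrow>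
           c' * fact (card A') * real (card A') ^ k * W_sum k A' B' w' u' \<le> (\<Sum>\<pi>\<in>bijs A' B'. \<bar>bij_inner k A' w' u' \<pi>\<bar>)"
    and fA: "finite A" and fB: "finite B" and cAB: "card A = card B" and big: "2 * Suc k < card A"
    and c_le: "c \<le> c' / (2 * 3 ^ Suc k * sqrt (3 * real (Suc k)) * 3 ^ k) / 2" "c \<le> (1 / real (Suc k) ^ Suc k) / 2"
  shows "c * fact (card A) * real (card A) ^ Suc k * W_sum (Suc k) A B w u
           \<le> (\<Sum>\<pi>\<in>bijs A B. \<bar>bij_inner (Suc k) A w u \<pi>\<bar>)"
proof -
  define D where "D = c' / (2 * 3 ^ Suc k * sqrt (3 * real (Suc k)) * 3 ^ k)"
  define n where "n = card A"
  define S where "S = (\<Sum>\<pi>\<in>bijs A B. \<bar>bij_inner (Suc k) A w u \<pi>\<bar>)"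
  define W0 where "W0 = Wvec (Suc k) A w 0 * Wvec (Suc k) B u 0"
  define R where "R = (\<Sum>j=0..k. real n powr (- real (Suc j) / 2) * Wvec (Suc k) A w (Suc j) * Wvec (Suc k) B u (Suc j))"
  define X where "X = fact n * real n ^ Suc k"
  have cA: "card A = n" and cB: "card B = n" using cAB by (simp_all add: n_def)
  have n: "2 * Suc k < n" using big by (simp add: n_def)
  have X: "X \<ge> 0" unfolding X_def by simp
  have W0: "W0 \<ge> 0" unfolding W0_def by (intro mult_nonneg_nonneg Wvec_nonneg)
  have R: "R \<ge> 0" unfolding R_def by (intro sum_nonneg mult_nonneg_nonneg Wvec_nonneg) simp
  have "real n powr (- real (0::nat) / 2) = 1" using n by simp
  then have split: "W_sum (Suc k) A B w u = W0 + R"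
    unfolding W_sum_def cA sum.atLeast0_atMost_Suc_shift W0_def R_def by (simp only: mult_1_left comp_def)
  have "c * (X * W0) \<le> (1 / real (Suc k) ^ Suc k) / 2 * (X * W0)"
    by (rule mult_right_mono[OF c_le(2)]) (use X W0 in simp)
  also have "\<dots> = fact n * (real n / real (Suc k)) ^ Suc k * W0 / 2"
    unfolding X_def by (simp add: power_divide)
  also have "\<dots> \<le> S / 2"
  proof -
    have "Suc k \<le> n" using n by simp
    from sum_abs_bij_inner_ge_W0[OF fA fB cA cB this, of w u]
    have "fact n * (real n / real (Suc k)) ^ Suc k * W0 \<le> S" unfolding W0_def S_def .
    then show ?thesis by linarith
  qed
  finally have first: "c * (X * W0) \<le> S / 2" .
  have "c * (X * R) \<le> D / 2 * (X * R)"
    by (rule mult_right_mono[OF c_le(1)[folded D_def]]) (use X R in simp)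
  also have "\<dots> = D * fact n * real n ^ Suc k * R / 2"
    unfolding X_def by simp
  also have "\<dots> \<le> S / 2"
    using sum_abs_bij_inner_ge_higher_terms[OF c' IH fA fB cA cB n, of w u, folded D_def R_def S_def] by linarith
  finally have tail: "c * (X * R) \<le> S / 2" .
  have "c * fact (card A) * real (card A) ^ Suc k * W_sum (Suc k) A B w u = c * (X * W0) + c * (X * R)"
    unfolding split X_def n_def by (simp only: distrib_left mult.assoc)
  then show ?thesis using first tail unfolding S_def by linarith
qed

lemma bij_inner_lower_bound_Suc:
  fixes c' :: real
  assumes c': "c' > 0"
    and IH: "\<And>(A'::'a set) (B'::'b set) w' u'. finite A' \<Longrightarrow> finite B' \<Longrightarrow> card A' = card B' \<Longrightarrow> 2 * k < card A' \<Longrightarrow>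
           c' * fact (card A') * real (card A') ^ k * W_sum k A' B' w' u' \<le> (\<Sum>\<pi>\<in>bijs A' B'. \<bar>bij_inner k A' w' u' \<pi>\<bar>)"
  shows "\<exists>c>0. \<forall>(A::'a set) (B::'b set) w u. finite A \<longrightarrow> finite B \<longrightarrow> card A = card B \<longrightarrow> 2 * Suc k < card A \<longrightarrow>
           c * fact (card A) * real (card A) ^ Suc k * W_sum (Suc k) A B w u \<le> (\<Sum>\<pi>\<in>bijs A B. \<bar>bij_inner (Suc k) A w u \<pi>\<bar>)"
proof (intro exI conjI allI impI)
  let ?D = "c' / (2 * 3 ^ Suc k * sqrt (3 * real (Suc k)) * 3 ^ k)"
  show "min ?D (1 / real (Suc k) ^ Suc k) / 2 > 0" using c' by simp
  fix A :: "'a set" and B :: "'b set" and w u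
  assume AB: "finite A" "finite B" "card A = card B" "2 * Suc k < card A"
  have "min ?D (1 / real (Suc k) ^ Suc k) / 2 \<le> ?D / 2"
    and "min ?D (1 / real (Suc k) ^ Suc k) / 2 \<le> (1 / real (Suc k) ^ Suc k) / 2"
    by (rule divide_right_mono, simp, simp)+
  from bij_inner_lower_bound_step[OF c' IH AB this]
  show "min ?D (1 / real (Suc k) ^ Suc k) / 2 * fact (card A) * real (card A) ^ Suc k * W_sum (Suc k) A B w u
      \<le> (\<Sum>\<pi>\<in>bijs A B. \<bar>bij_inner (Suc k) A w u \<pi>\<bar>)" .
qed

lemma bij_inner_lower_bound:
  "\<exists>c>0. \<forall>(A::'a set) (B::'b set) w u. finite A \<longrightarrow> finite B \<longrightarrow> card A = card B \<longrightarrow> 2 * k < card A \<longrightarrow>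
      c * fact (card A) * real (card A) ^ k * W_sum k A B w u \<le> (\<Sum>\<pi>\<in>bijs A B. \<bar>bij_inner k A w u \<pi>\<bar>)"
proof (induction k)
  case 0
  show ?case
  proof (intro exI[of _ 1] conjI allI impI)
    fix A :: "'a set" and B :: "'b set" and w u
    assume "finite A" "finite B" "card A = card B" "2 * 0 < card A"
    then have "fact (card A) * W_sum 0 A B w u \<le> (\<Sum>\<pi>\<in>bijs A B. \<bar>bij_inner 0 A w u \<pi>\<bar>)"
      by (intro bij_inner_lower_bound_0) simp_all
    then show "1 * fact (card A) * real (card A) ^ 0 * W_sum 0 A B w u \<le> (\<Sum>\<pi>\<in>bijs A B. \<bar>bij_inner 0 A w u \<pi>\<bar>)"
      by simp
  qed simp
next
  case (Suc k)
  then obtain c' where "c' > 0 \<and> (\<forall>(A::'a set) (B::'b set) w u. finite A \<longrightarrow> finite B \<longrightarrow>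
      card A = card B \<longrightarrow> 2 * k < card A \<longrightarrow>
      c' * fact (card A) * real (card A) ^ k * W_sum k A B w u \<le> (\<Sum>\<pi>\<in>bijs A B. \<bar>bij_inner k A w u \<pi>\<bar>))" ..
  then show ?case by (intro bij_inner_lower_bound_Suc[of c' k]) simp_all
qed

theorem theorem1p4:
  fixes k :: nat
  assumes "k \<ge> 1"
  shows "\<exists>c>0. \<forall>n::nat. n > 2 * k \<longrightarrow>
    (\<forall>w u :: nat set \<Rightarrow> real.
      (\<Sum>\<pi>\<in>{\<pi>. \<pi> permutes {1..n}}.
          \<bar>hyp_inner {1..n} k (perm_weight \<pi> w) u\<bar>) / fact n
      \<ge> c * real n ^ k *
        (\<Sum>i=0..k. real n powr (- real i / 2) * Wvec k {1..n} w i * Wvec k {1..n} u i))"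
proof -
  obtain c where c: "c > 0" and bound: "\<forall>(A::nat set) (B::nat set) w u. finite A \<longrightarrow> finite B \<longrightarrow>
      card A = card B \<longrightarrow> 2 * k < card A \<longrightarrow>
      c * fact (card A) * real (card A) ^ k * W_sum k A B w u \<le> (\<Sum>\<pi>\<in>bijs A B. \<bar>bij_inner k A w u \<pi>\<bar>)"
    using bij_inner_lower_bound by blast
  have "c * fact n * real n ^ k * W_sum k {1..n} {1..n} w u
      \<le> (\<Sum>\<pi>\<in>{\<pi>. \<pi> permutes {1..n}}. \<bar>hyp_inner {1..n} k (perm_weight \<pi> w) u\<bar>)"
    if "n > 2 * k" for n and w u :: "nat set \<Rightarrow> real"
    using bound[rule_format, of "{1..n}" "{1..n}" w u] that by (simp add: sum_permutes_abs_hyp_inner)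
  then show ?thesis
    using c unfolding W_sum_def by (auto simp: field_simps)
qed

end
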